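(* The $R$-algebra $\mathcal H_{n,r}$ is isomorphic to the $R$-algebra with generators $t_1,\ldots,t_n,g_1,\ldots,g_{n-1}$ and defining relations (1) $(t_i-u_1)\cdots(t_i-u_r)=0$ for $1\le i\le n$; (2) $t_it_j=t_jt_i$ for $1\le i,j\le n$; (3) $g_jt_i=t_{s_j(i)}g_j$ for $1\le j\le n-1$, $1\le i\le n$; (4) $g_ig_j=g_jg_i$ for $|i-j|>1$; (5) $g_ig_{i+1}g_i=g_{i+1}g_ig_{i+1}$ for $1\le i\le n-2$; (6) $g_i^2=1+(q-q^{-1})e_ig_i$ for $1\le i\le n-1$, where in the presented algebra $e_i:=\sum_{\mathbf k\in[1,r]^n,\ k_i=k_{i+1}}b_{\mathbf k}$ with $b_{\mathbf k}:=\prod_{i=1}^n\prod_{1\le j\le r,\,j\ne k_i}\frac{t_i-u_j}{u_{k_i}-u_j}$; the isomorphism sends $t_i\mapsto t_i$ and $g_i\mapsto T_i+B'_{i,i+1}$.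
   Context: Standing setup: $R$ is an integral domain, $n\ge 1$, $r\ge 1$, and $q,u_1,\ldots,u_r\in R$ with $q$ invertible in $R$ and $\Delta:=\prod_{1\le j<i\le r}(u_i-u_j)$ invertible in $R$. For $1\le c\le r$ let $F_c(X)\in R[X]$ be the unique polynomial of degree $\le r-1$ with $F_c(u_{c'})=\delta_{c,c'}\Delta$ for all $1\le c'\le r$. The modified Ariki–Koike (Shoji) algebra $\mathcal H_{n,r}=\mathcal H_{n,r}(R,q,u_1,\ldots,u_r)$ is the associative $R$-algebra generated by $t_1,\ldots,t_n,T_1,\ldots,T_{n-1}$ subject to: $(T_i-q)(T_i+q^{-1})=0$; $(t_i-u_1)\cdots(t_i-u_r)=0$; $T_iT_{i+1}T_i=T_{i+1}T_iT_{i+1}$; $T_iT_j=T_jT_i$ for $|i-j|\ge2$; $t_it_j=t_jt_i$; $T_jt_k=t_kT_j$ for $k\ne j,j+1$; and for $2\le j\le n$: $T_{j-1}t_j=t_{j-1}T_{j-1}+\Delta^{-2}\sum_{1\le c_1<c_2\le r}(u_{c_2}-u_{c_1})(q-q^{-1})F_{c_1}(t_{j-1})F_{c_2}(t_j)$ and $T_{j-1}t_{j-1}=t_jT_{j-1}-\Delta^{-2}\sum_{1\le c_1<c_2\le r}(u_{c_2}-u_{c_1})(q-q^{-1})F_{c_1}(t_{j-1})F_{c_2}(t_j)$. Write $[1,r]=\{1,\ldots,r\}$ and, in $\mathcal H_{n,r}$, $b_{\mathbf k}:=\prod_{i=1}^n\prod_{1\le j\le r,\,j\ne k_i}\frac{t_i-u_j}{u_{k_i}-u_j}$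 for $\mathbf k\in[1,r]^n$ and $B'_{i,j}:=-(q-q^{-1})\sum_{\mathbf k,\ k_i<k_j}b_{\mathbf k}$. $s_j=(j\ j+1)\in\mathfrak S(n)$. *)

theory Defs
  imports "HOL-Library.Poly_Mapping" "HOL-Library.FuncSet" "HOL-Computational_Algebra.Polynomial"
begin

text \<open>Elements of the free algebra on generators of type 'g: finitely supported
  R-linear combinations of words (lists of generators).\<close>

type_synonym ('g, 'a) nc = "'g list \<Rightarrow>\<^sub>0 'a"

definition ncmul :: "('g, 'a::comm_ring_1) nc \<Rightarrow> ('g, 'a) nc \<Rightarrow> ('g, 'a) nc" where
  "ncmul p q = (\<Sum>v\<in>Poly_Mapping.keys p. \<Sum>w\<in>Poly_Mapping.keys q. Poly_Mapping.single (v @ w) (Poly_Mapping.lookup p v * Poly_Mapping.lookup q w))"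

definition ncconst :: "'a::comm_ring_1 \<Rightarrow> ('g, 'a) nc" where
  "ncconst c = Poly_Mapping.single [] c"

definition ncword :: "'g list \<Rightarrow> ('g, 'a::comm_ring_1) nc" where
  "ncword w = Poly_Mapping.single w 1"

definition ncgen :: "'g \<Rightarrow> ('g, 'a::comm_ring_1) nc" where
  "ncgen g = ncword [g]"

definition ncprod :: "('g, 'a::comm_ring_1) nc list \<Rightarrow> ('g, 'a) nc" where
  "ncprod xs = foldr ncmul xs (ncconst 1)"

definition ncpow :: "('g, 'a::comm_ring_1) nc \<Rightarrow> nat \<Rightarrow> ('g, 'a) nc" where
  "ncpow x k = ncprod (replicate k x)"

definition ncpoly :: "'a::comm_ring_1 poly \<Rightarrow> ('g, 'a) nc \<Rightarrow> ('g, 'a) nc" where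
  "ncpoly p x = (\<Sum>i\<le>degree p. ncmul (ncconst (coeff p i)) (ncpow x i))"

text \<open>The subalgebra of the free algebra spanned by words over the generator set S
  (= the free algebra on S).\<close>
definition fa_on :: "'g set \<Rightarrow> ('g, 'a::zero) nc set" where
  "fa_on S = {x. \<forall>w\<in>Poly_Mapping.keys x. set w \<subseteq> S}"

inductive_set nc_ideal :: "'g set \<Rightarrow> ('g, 'a::comm_ring_1) nc set \<Rightarrow> ('g, 'a) nc set"
  for S :: "'g set" and Rel :: "('g, 'a) nc set" where
  zero: "0 \<in> nc_ideal S Rel"
| add: "x \<in> nc_ideal S Rel \<Longrightarrow> y \<in> nc_ideal S Rel \<Longrightarrow> x + y \<in> nc_ideal S Rel"
| gen: "set v \<subseteq> S \<Longrightarrow> set w \<subseteq> S \<Longrightarrow> \<rho> \<in> Rel \<Longrightarrow>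
          ncmul (ncconst c) (ncmul (ncword v) (ncmul \<rho> (ncword w))) \<in> nc_ideal S Rel"

definition nc_subst :: "('g \<Rightarrow> ('h, 'a::comm_ring_1) nc) \<Rightarrow> ('g, 'a) nc \<Rightarrow> ('h, 'a) nc" where
  "nc_subst f p = (\<Sum>w\<in>Poly_Mapping.keys p. ncmul (ncconst (Poly_Mapping.lookup p w)) (ncprod (map f w)))"

definition ring_inv :: "'a::comm_ring_1 \<Rightarrow> 'a" where
  "ring_inv x = (THE y. x * y = 1)"

definition Delta :: "(nat \<Rightarrow> 'a::comm_ring_1) \<Rightarrow> nat \<Rightarrow> 'a" where
  "Delta u r = (\<Prod>j\<in>{1..r}. \<Prod>i\<in>{j<..r}. (u i - u j))"

definition Fpoly :: "(nat \<Rightarrow> 'a::comm_ring_1) \<Rightarrow> nat \<Rightarrow> nat \<Rightarrow> 'a poly" where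
  "Fpoly u r c = (THE p. degree p \<le> r - 1 \<and>
      (\<forall>c'\<in>{1..r}. poly p (u c') = (if c = c' then Delta u r else 0)))"

definition sw :: "nat \<Rightarrow> nat \<Rightarrow> nat" where
  "sw j i = (if i = j then Suc j else if i = Suc j then j else i)"

definition Kset :: "nat \<Rightarrow> nat \<Rightarrow> (nat \<Rightarrow> nat) set" where
  "Kset n r = (\<Pi>\<^sub>E i\<in>{1..n}. {1..r})"

text \<open>b_k, for elements tg i playing the role of t_i (factors multiplied in increasing order
  of i, then j; these factors commute modulo the relations).\<close>
definition bk :: "(nat \<Rightarrow> 'a::comm_ring_1) \<Rightarrow> nat \<Rightarrow> nat \<Rightarrow> (nat \<Rightarrow> ('g, 'a) nc) \<Rightarrow> (nat \<Rightarrow> nat) \<Rightarrow> ('g, 'a) nc" where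
  "bk u r n tg k = ncprod (map (\<lambda>i. ncprod (map (\<lambda>j.
        ncmul (ncconst (ring_inv (u (k i) - u j))) (tg i - ncconst (u j)))
        (filter (\<lambda>j. j \<noteq> k i) [1..<Suc r]))) [1..<Suc n])"

definition eel :: "(nat \<Rightarrow> 'a::comm_ring_1) \<Rightarrow> nat \<Rightarrow> nat \<Rightarrow> (nat \<Rightarrow> ('g, 'a) nc) \<Rightarrow> nat \<Rightarrow> ('g, 'a) nc" where
  "eel u r n tg i = (\<Sum>k\<in>{k\<in>Kset n r. k i = k (Suc i)}. bk u r n tg k)"

definition Bprime :: "(nat \<Rightarrow> 'a::comm_ring_1) \<Rightarrow> nat \<Rightarrow> nat \<Rightarrow> 'a \<Rightarrow> (nat \<Rightarrow> ('g, 'a) nc) \<Rightarrow> nat \<Rightarrow> nat \<Rightarrow> ('g, 'a) nc" where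
  "Bprime u r n q tg i j = ncmul (ncconst (- (q - ring_inv q)))
      (\<Sum>k\<in>{k\<in>Kset n r. k i < k j}. bk u r n tg k)"

datatype hgen = Ht nat | HT nat

definition Hgens :: "nat \<Rightarrow> hgen set" where
  "Hgens n = Ht ` {1..n} \<union> HT ` {1..n-1}"

definition Hcorr :: "(nat \<Rightarrow> 'a::comm_ring_1) \<Rightarrow> nat \<Rightarrow> 'a \<Rightarrow> nat \<Rightarrow> (hgen, 'a) nc" where
  "Hcorr u r q j = ncmul (ncconst (ring_inv (Delta u r) ^ 2))
     (\<Sum>(c1, c2)\<in>{(c1, c2). 1 \<le> c1 \<and> c1 < c2 \<and> c2 \<le> r}.
        ncmul (ncconst ((u c2 - u c1) * (q - ring_inv q)))
          (ncmul (ncpoly (Fpoly u r c1) (ncgen (Ht (j - 1)))) (ncpoly (Fpoly u r c2) (ncgen (Ht j)))))"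

definition Hrels :: "(nat \<Rightarrow> 'a::comm_ring_1) \<Rightarrow> nat \<Rightarrow> nat \<Rightarrow> 'a \<Rightarrow> (hgen, 'a) nc set" where
  "Hrels u r n q =
     {\<rho>. \<exists>i\<in>{1..n-1}. \<rho> = ncmul (ncgen (HT i) - ncconst q) (ncgen (HT i) + ncconst (ring_inv q))}
   \<union> {\<rho>. \<exists>i\<in>{1..n}. \<rho> = ncprod (map (\<lambda>c. ncgen (Ht i) - ncconst (u c)) [1..<Suc r])}
   \<union> {\<rho>. \<exists>i\<in>{1..n-2}. \<rho> = ncprod [ncgen (HT i), ncgen (HT (Suc i)), ncgen (HT i)]
                              - ncprod [ncgen (HT (Suc i)), ncgen (HT i), ncgen (HT (Suc i))]}
   \<union> {\<rho>. \<exists>i\<in>{1..n-1}. \<exists>j\<in>{1..n-1}. (i + 2 \<le> j \<or> j + 2 \<le> i) \<and>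
          \<rho> = ncmul (ncgen (HT i)) (ncgen (HT j)) - ncmul (ncgen (HT j)) (ncgen (HT i))}
   \<union> {\<rho>. \<exists>i\<in>{1..n}. \<exists>j\<in>{1..n}.
          \<rho> = ncmul (ncgen (Ht i)) (ncgen (Ht j)) - ncmul (ncgen (Ht j)) (ncgen (Ht i))}
   \<union> {\<rho>. \<exists>j\<in>{1..n-1}. \<exists>k\<in>{1..n}. k \<noteq> j \<and> k \<noteq> Suc j \<and>
          \<rho> = ncmul (ncgen (HT j)) (ncgen (Ht k)) - ncmul (ncgen (Ht k)) (ncgen (HT j))}
   \<union> {\<rho>. \<exists>j\<in>{2..n}.
          \<rho> = ncmul (ncgen (HT (j - 1))) (ncgen (Ht j)) - ncmul (ncgen (Ht (j - 1))) (ncgen (HT (j - 1)))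
                - Hcorr u r q j}
   \<union> {\<rho>. \<exists>j\<in>{2..n}.
          \<rho> = ncmul (ncgen (HT (j - 1))) (ncgen (Ht (j - 1))) - ncmul (ncgen (Ht j)) (ncgen (HT (j - 1)))
                + Hcorr u r q j}"

datatype pgen = Pt nat | Pg nat

definition Pgens :: "nat \<Rightarrow> pgen set" where
  "Pgens n = Pt ` {1..n} \<union> Pg ` {1..n-1}"

definition Prels :: "(nat \<Rightarrow> 'a::comm_ring_1) \<Rightarrow> nat \<Rightarrow> nat \<Rightarrow> 'a \<Rightarrow> (pgen, 'a) nc set" where
  "Prels u r n q =
     {\<rho>. \<exists>i\<in>{1..n}. \<rho> = ncprod (map (\<lambda>c. ncgen (Pt i) - ncconst (u c)) [1..<Suc r])}
   \<union> {\<rho>. \<exists>i\<in>{1..n}. \<exists>j\<in>{1..n}.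
          \<rho> = ncmul (ncgen (Pt i)) (ncgen (Pt j)) - ncmul (ncgen (Pt j)) (ncgen (Pt i))}
   \<union> {\<rho>. \<exists>j\<in>{1..n-1}. \<exists>i\<in>{1..n}.
          \<rho> = ncmul (ncgen (Pg j)) (ncgen (Pt i)) - ncmul (ncgen (Pt (sw j i))) (ncgen (Pg j))}
   \<union> {\<rho>. \<exists>i\<in>{1..n-1}. \<exists>j\<in>{1..n-1}. (i + 2 \<le> j \<or> j + 2 \<le> i) \<and>
          \<rho> = ncmul (ncgen (Pg i)) (ncgen (Pg j)) - ncmul (ncgen (Pg j)) (ncgen (Pg i))}
   \<union> {\<rho>. \<exists>i\<in>{1..n-2}. \<rho> = ncprod [ncgen (Pg i), ncgen (Pg (Suc i)), ncgen (Pg i)]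
                              - ncprod [ncgen (Pg (Suc i)), ncgen (Pg i), ncgen (Pg (Suc i))]}
   \<union> {\<rho>. \<exists>i\<in>{1..n-1}. \<rho> = ncmul (ncgen (Pg i)) (ncgen (Pg i)) - ncconst 1
          - ncmul (ncconst (q - ring_inv q)) (ncmul (eel u r n (\<lambda>i. ncgen (Pt i)) i) (ncgen (Pg i)))}"

definition psi_gen :: "(nat \<Rightarrow> 'a::comm_ring_1) \<Rightarrow> nat \<Rightarrow> nat \<Rightarrow> 'a \<Rightarrow> pgen \<Rightarrow> (hgen, 'a) nc" where
  "psi_gen u r n q g = (case g of
       Pt i \<Rightarrow> ncgen (Ht i)
     | Pg i \<Rightarrow> ncgen (HT i) + Bprime u r n q (\<lambda>i. ncgen (Ht i)) i (Suc i))"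

end

theory Submission
  imports Defs
begin

text \<open>The t_i commute and are annihilated by the split polynomial (X - u_1) ... (X - u_r)
  whose roots differ by units, so the Lagrange idempotents L_c(t_i) produce a complete family of
  orthogonal idempotents b_k, k in [1,r]^n, modulo either set of relations.  Their span is a copy
  of the ring of functions [1,r]^n \<rightarrow> R, in which t_i is the function k \<mapsto> u_{k_i}, and every
  element X with X t_j = t_{s_i(j)} X acts on it by permuting the index k by s_i.  In this
  diagonal subalgebra B'_{i,i+1}, e_i and the correction terms of H_{n,r} become explicit
  functions of k, and each relation of one presentation, transported along
  g_i \<mapsto> T_i + B'_{i,i+1} resp. T_i \<mapsto> g_i - B'_{i,i+1}, reduces to an identity between such
  functions.  The two substitutions are mutually inverse on the free algebras, hence induce
  inverse isomorphisms of the presented algebras.\<close>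

section \<open>The free algebra as a ring\<close>

text \<open>Words form a monoid under concatenation, which makes the finitely supported functions on
  words a ring whose multiplication is ncmul.\<close>

instantiation list :: (type) monoid_add
begin
definition zero_list_def: "zero_list = []"
definition plus_list_def: "plus_list xs ys = xs @ ys"
instance by standard (auto simp: zero_list_def plus_list_def)
end

lemma single_mult_append:
  "Poly_Mapping.single v a * Poly_Mapping.single w b = Poly_Mapping.single (v @ w) (a * b :: 'a::semiring_0)"
  by (simp add: mult_single plus_list_def)

lemma poly_mapping_sum_single:
  "p = (\<Sum>v\<in>Poly_Mapping.keys p. Poly_Mapping.single v (Poly_Mapping.lookup p v))"
proof (rule poly_mapping_eqI)
  fix x
  have "Poly_Mapping.lookup (\<Sum>v\<in>Poly_Mapping.keys p. Poly_Mapping.single v (Poly_Mapping.lookup p v)) x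
     = (\<Sum>v\<in>Poly_Mapping.keys p. if v = x then Poly_Mapping.lookup p v else 0)"
    by (simp add: lookup_sum lookup_single when_def)
  also have "\<dots> = Poly_Mapping.lookup p x"
    by (simp add: in_keys_iff)
  finally show "Poly_Mapping.lookup p x =
      Poly_Mapping.lookup (\<Sum>v\<in>Poly_Mapping.keys p. Poly_Mapping.single v (Poly_Mapping.lookup p v)) x"
    by simp
qed

lemma ncmul_eq [simp]: "ncmul p q = p * (q :: ('g, 'a::comm_ring_1) nc)"
proof -
  have "ncmul p q = (\<Sum>v\<in>Poly_Mapping.keys p. \<Sum>w\<in>Poly_Mapping.keys q.
      Poly_Mapping.single v (Poly_Mapping.lookup p v) * Poly_Mapping.single w (Poly_Mapping.lookup q w))"
    by (simp add: ncmul_def single_mult_append)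
  also have "\<dots> = (\<Sum>v\<in>Poly_Mapping.keys p. Poly_Mapping.single v (Poly_Mapping.lookup p v)) *
      (\<Sum>w\<in>Poly_Mapping.keys q. Poly_Mapping.single w (Poly_Mapping.lookup q w))"
    by (simp add: sum_product)
  also have "\<dots> = p * q" by (simp flip: poly_mapping_sum_single)
  finally show ?thesis .
qed

lemma ncconst_eq_single: "ncconst c = Poly_Mapping.single 0 c"
  by (simp add: ncconst_def zero_list_def)

lemma ncconst_1 [simp]: "ncconst 1 = 1"
  by (simp add: ncconst_eq_single)

lemma ncconst_0 [simp]: "ncconst 0 = 0"
  by (simp add: ncconst_eq_single)

lemma ncconst_mult: "ncconst (a * b) = ncconst a * ncconst b"
  by (simp add: ncconst_eq_single mult_single)

lemma ncconst_add: "ncconst (a + b) = ncconst a + ncconst b"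
  by (simp add: ncconst_eq_single single_add)

lemma ncconst_diff: "ncconst (a - b) = ncconst a - ncconst b"
  by (simp add: ncconst_eq_single single_diff)

lemma ncconst_uminus: "ncconst (- a) = - ncconst a"
  by (simp add: ncconst_eq_single single_uminus)

lemma ncconst_commute: "ncconst c * p = p * (ncconst c :: ('g, 'a::comm_ring_1) nc)"
proof -
  have "ncconst c * p = (\<Sum>v\<in>Poly_Mapping.keys p. ncconst c * Poly_Mapping.single v (Poly_Mapping.lookup p v))"
    by (subst poly_mapping_sum_single) (simp add: sum_distrib_left)
  also have "\<dots> = (\<Sum>v\<in>Poly_Mapping.keys p. Poly_Mapping.single v (Poly_Mapping.lookup p v) * ncconst c)"
    by (simp add: ncconst_def single_mult_append mult.commute)
  also have "\<dots> = p * ncconst c"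
    by (subst (3) poly_mapping_sum_single) (simp add: sum_distrib_right)
  finally show ?thesis .
qed

lemma ncconst_left_commute: "x * (ncconst c * y) = ncconst c * (x * (y :: ('g, 'a::comm_ring_1) nc))"
  by (metis mult.assoc ncconst_commute)

lemma ncconst_mult_mult:
  "(ncconst a * x) * (ncconst b * y) = ncconst (a * b) * (x * (y :: ('g, 'a::comm_ring_1) nc))"
  by (simp only: mult.assoc ncconst_left_commute[of x] ncconst_mult)

lemma ncword_append: "ncword (v @ w) = ncword v * (ncword w :: ('g, 'a::comm_ring_1) nc)"
  by (simp add: ncword_def single_mult_append)

lemma ncword_Nil [simp]: "ncword [] = (1 :: ('g, 'a::comm_ring_1) nc)"
  by (simp add: ncword_def flip: zero_list_def)

lemma ncword_Cons: "ncword (g # w) = ncgen g * (ncword w :: ('g, 'a::comm_ring_1) nc)"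
  by (simp add: ncgen_def flip: ncword_append)

lemma ncword_eq_prod_list: "ncword w = prod_list (map ncgen w :: ('g, 'a::comm_ring_1) nc list)"
  by (induct w) (simp_all add: ncword_Cons)

lemma ncprod_eq [simp]: "ncprod xs = prod_list xs"
  by (induct xs) (simp_all add: ncprod_def)

lemma ncpow_eq [simp]: "ncpow x k = x ^ k"
  by (simp add: ncpow_def prod_list_replicate)

lemma single_eq_ncconst_mult_ncword:
  "Poly_Mapping.single w a = ncconst a * (ncword w :: ('g, 'a::comm_ring_1) nc)"
  by (simp add: ncconst_def ncword_def single_mult_append)

lemma sum_ncconst_mult_ncword:
  "(\<Sum>v\<in>Poly_Mapping.keys p. ncconst (Poly_Mapping.lookup p v) * ncword v) = p"
  by (simp add: single_eq_ncconst_mult_ncword [symmetric] poly_mapping_sum_single [symmetric])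

lemma nc_subst_add: "nc_subst f (p + q) = nc_subst f p + nc_subst f q"
  unfolding nc_subst_def
  by (rule setsum_keys_plus_distrib) (simp_all add: ncconst_add distrib_right)

lemma nc_subst_0 [simp]: "nc_subst f 0 = 0"
  by (simp add: nc_subst_def)

lemma nc_subst_single: "nc_subst f (Poly_Mapping.single w a) = ncconst a * prod_list (map f w)"
  by (cases "a = 0") (simp_all add: nc_subst_def)

lemma nc_subst_sum: "nc_subst f (sum g A) = (\<Sum>x\<in>A. nc_subst f (g x))"
  by (induct A rule: infinite_finite_induct) (simp_all add: nc_subst_add)

lemma nc_subst_uminus: "nc_subst f (- p) = - nc_subst f p"
proof -
  have "nc_subst f p + nc_subst f (- p) = 0" by (simp flip: nc_subst_add)
  then show ?thesis by (metis minus_unique)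
qed

lemma nc_subst_diff: "nc_subst f (p - q) = nc_subst f p - nc_subst f q"
  using nc_subst_add[of f p "- q"] by (simp add: nc_subst_uminus)

lemma nc_subst_mult: "nc_subst f (p * q) = nc_subst f p * nc_subst f q"
proof -
  let ?s = "\<lambda>p v. Poly_Mapping.single v (Poly_Mapping.lookup p v)"
  have "nc_subst f (p * q) =
      nc_subst f ((\<Sum>v\<in>Poly_Mapping.keys p. ?s p v) * (\<Sum>w\<in>Poly_Mapping.keys q. ?s q w))"
    by (simp flip: poly_mapping_sum_single)
  also have "\<dots> = (\<Sum>v\<in>Poly_Mapping.keys p. \<Sum>w\<in>Poly_Mapping.keys q.
      nc_subst f (?s p v) * nc_subst f (?s q w))"
    by (simp add: sum_product nc_subst_sum single_mult_append nc_subst_single ncconst_mult,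
        intro sum.cong refl, simp add: mult.assoc, metis mult.assoc ncconst_commute)
  also have "\<dots> = (\<Sum>v\<in>Poly_Mapping.keys p. nc_subst f (?s p v)) *
      (\<Sum>w\<in>Poly_Mapping.keys q. nc_subst f (?s q w))"
    by (simp add: sum_product)
  also have "\<dots> = nc_subst f p * nc_subst f q"
    by (simp add: nc_subst_sum[symmetric] flip: poly_mapping_sum_single)
  finally show ?thesis .
qed

lemma nc_subst_ncconst [simp]: "nc_subst f (ncconst c) = ncconst c"
  by (simp add: ncconst_def nc_subst_single)

lemma nc_subst_1 [simp]: "nc_subst f 1 = 1"
  using nc_subst_ncconst[of f 1] by simp

lemma nc_subst_ncgen [simp]: "nc_subst f (ncgen g) = f g"
  by (simp add: ncgen_def ncword_def nc_subst_single)

lemma nc_subst_ncword: "nc_subst f (ncword w) = prod_list (map f w)"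
  by (simp add: ncword_def nc_subst_single)

lemma nc_subst_prod_list: "nc_subst f (prod_list xs) = prod_list (map (nc_subst f) xs)"
  by (induct xs) (simp_all add: nc_subst_mult)

lemma nc_subst_power: "nc_subst f (x ^ k) = nc_subst f x ^ k"
  by (induct k) (simp_all add: nc_subst_mult)

lemma nc_subst_nc_subst: "nc_subst f (nc_subst g p) = nc_subst (\<lambda>x. nc_subst f (g x)) p"
proof -
  have "nc_subst f (nc_subst g p) =
      nc_subst f (\<Sum>w\<in>Poly_Mapping.keys p. ncconst (Poly_Mapping.lookup p w) * prod_list (map g w))"
    by (simp only: nc_subst_def[of g p] ncmul_eq ncprod_eq)
  also have "\<dots> = (\<Sum>w\<in>Poly_Mapping.keys p.
      ncconst (Poly_Mapping.lookup p w) * prod_list (map (\<lambda>x. nc_subst f (g x)) w))"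
    by (simp only: nc_subst_sum nc_subst_mult nc_subst_prod_list nc_subst_ncconst map_map o_def)
  also have "\<dots> = nc_subst (\<lambda>x. nc_subst f (g x)) p"
    by (simp only: nc_subst_def ncmul_eq ncprod_eq)
  finally show ?thesis .
qed

lemma nc_subst_ncgen_id: "nc_subst ncgen p = p"
proof -
  have "nc_subst ncgen p = (\<Sum>v\<in>Poly_Mapping.keys p. Poly_Mapping.single v (Poly_Mapping.lookup p v))"
    by (simp add: nc_subst_def single_eq_ncconst_mult_ncword ncword_eq_prod_list)
  then show ?thesis by (simp flip: poly_mapping_sum_single)
qed

section \<open>Two-sided ideals\<close>

text \<open>An ideal over the full generator set UNIV absorbs arbitrary multiplication; ideals over a
  generator set S are recovered from it by restricting to fa_on S.\<close>

abbreviation full_ideal :: "('g, 'a::comm_ring_1) nc set \<Rightarrow> ('g, 'a) nc set" where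
  "full_ideal Rel \<equiv> nc_ideal UNIV Rel"

lemma nc_ideal_gen_mult:
  "set v \<subseteq> S \<Longrightarrow> set w \<subseteq> S \<Longrightarrow> \<rho> \<in> Rel \<Longrightarrow>
     ncconst c * (ncword v * (\<rho> * ncword w)) \<in> nc_ideal S Rel"
  using nc_ideal.gen[of v S w \<rho> Rel c] by simp

lemma nc_ideal_rel: "\<rho> \<in> Rel \<Longrightarrow> \<rho> \<in> nc_ideal S Rel"
  using nc_ideal.gen[of "[]" S "[]" \<rho> Rel 1] by simp

lemma nc_ideal_subset_full_ideal: "x \<in> nc_ideal S Rel \<Longrightarrow> x \<in> full_ideal Rel"
  by (induct rule: nc_ideal.induct) (auto intro: nc_ideal.zero nc_ideal.add nc_ideal_gen_mult)

lemma full_ideal_ncword_mult: "x \<in> full_ideal Rel \<Longrightarrow> ncword v * x \<in> full_ideal Rel"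
proof (induct rule: nc_ideal.induct)
  case (gen v' w \<rho> c)
  have "ncword v * (ncmul (ncconst c) (ncmul (ncword v') (ncmul \<rho> (ncword w))))
     = ncconst c * (ncword (v @ v') * (\<rho> * ncword w))"
    by (simp only: ncmul_eq ncconst_left_commute ncword_append mult.assoc)
  then show ?case using gen by (simp add: nc_ideal_gen_mult)
qed (simp_all add: nc_ideal.zero distrib_left nc_ideal.add)

lemma full_ideal_mult_ncword: "x \<in> full_ideal Rel \<Longrightarrow> x * ncword v \<in> full_ideal Rel"
proof (induct rule: nc_ideal.induct)
  case (gen v' w \<rho> c)
  have "(ncmul (ncconst c) (ncmul (ncword v') (ncmul \<rho> (ncword w)))) * ncword v
     = ncconst c * (ncword v' * (\<rho> * ncword (w @ v)))"
    by (simp add: ncword_append mult.assoc)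
  then show ?case using gen by (simp add: nc_ideal_gen_mult)
qed (simp_all add: nc_ideal.zero distrib_right nc_ideal.add)

lemma full_ideal_ncconst_mult: "x \<in> full_ideal Rel \<Longrightarrow> ncconst c * x \<in> full_ideal Rel"
proof (induct rule: nc_ideal.induct)
  case (gen v' w \<rho> c')
  have "ncconst c * (ncmul (ncconst c') (ncmul (ncword v') (ncmul \<rho> (ncword w))))
     = ncconst (c * c') * (ncword v' * (\<rho> * ncword w))"
    by (simp add: ncconst_mult mult.assoc)
  then show ?case using gen by (simp add: nc_ideal_gen_mult)
qed (simp_all add: nc_ideal.zero distrib_left nc_ideal.add)

lemma full_ideal_sum: "(\<And>i. i \<in> A \<Longrightarrow> f i \<in> full_ideal Rel) \<Longrightarrow> sum f A \<in> full_ideal Rel"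
  by (induct A rule: infinite_finite_induct) (auto intro: nc_ideal.zero nc_ideal.add)

lemma full_ideal_mult_left:
  assumes "x \<in> full_ideal Rel"
  shows "p * x \<in> full_ideal Rel"
proof -
  have "p * x = (\<Sum>v\<in>Poly_Mapping.keys p. ncconst (Poly_Mapping.lookup p v) * (ncword v * x))"
    by (simp only: sum_ncconst_mult_ncword flip: sum_distrib_right mult.assoc)
  also have "\<dots> \<in> full_ideal Rel"
    using assms by (intro full_ideal_sum full_ideal_ncconst_mult full_ideal_ncword_mult)
  finally show ?thesis .
qed

lemma full_ideal_mult_right:
  assumes "x \<in> full_ideal Rel"
  shows "x * p \<in> full_ideal Rel"
proof -
  have "x * p = x * (\<Sum>v\<in>Poly_Mapping.keys p. ncconst (Poly_Mapping.lookup p v) * ncword v)"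
    by (simp only: sum_ncconst_mult_ncword)
  also have "\<dots> = (\<Sum>v\<in>Poly_Mapping.keys p. ncconst (Poly_Mapping.lookup p v) * (x * ncword v))"
    by (simp only: sum_distrib_left ncconst_left_commute)
  also have "\<dots> \<in> full_ideal Rel"
    using assms by (intro full_ideal_sum full_ideal_ncconst_mult full_ideal_mult_ncword)
  finally show ?thesis .
qed

lemma full_ideal_uminus: "x \<in> full_ideal Rel \<Longrightarrow> - x \<in> full_ideal Rel"
  using full_ideal_ncconst_mult[of x Rel "-1"] by (simp add: ncconst_uminus)

lemma nc_subst_full_ideal:
  assumes "x \<in> full_ideal Rel" "\<And>\<rho>. \<rho> \<in> Rel \<Longrightarrow> nc_subst f \<rho> \<in> full_ideal Rel'"
  shows "nc_subst f x \<in> full_ideal Rel'"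
  using assms(1)
proof (induct rule: nc_ideal.induct)
  case (gen v w \<rho> c)
  show ?case
    using assms(2)[OF gen(3)] by (simp add: nc_subst_mult full_ideal_mult_left full_ideal_mult_right)
qed (simp_all add: nc_subst_add nc_ideal.zero nc_ideal.add)

lemma fa_on_add: "(x::('g, 'a::comm_ring_1) nc) \<in> fa_on S \<Longrightarrow> y \<in> fa_on S \<Longrightarrow> x + y \<in> fa_on S"
  unfolding fa_on_def using keys_add[of x y] by blast

lemma fa_on_diff: "(x::('g, 'a::comm_ring_1) nc) \<in> fa_on S \<Longrightarrow> y \<in> fa_on S \<Longrightarrow> x - y \<in> fa_on S"
  unfolding diff_conv_add_uminus fa_on_def using keys_add[of x "- y"] by auto

lemma fa_on_mult: "x \<in> fa_on S \<Longrightarrow> y \<in> fa_on S \<Longrightarrow> x * y \<in> fa_on S"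
  unfolding fa_on_def using keys_mult[of x y] by (fastforce simp: plus_list_def)

lemma fa_on_ncconst: "ncconst c \<in> fa_on S"
  by (simp add: fa_on_def ncconst_def)

lemma fa_on_1: "(1::('g, 'a::comm_ring_1) nc) \<in> fa_on S"
  by (metis fa_on_ncconst ncconst_1)

lemma fa_on_ncgen: "g \<in> S \<Longrightarrow> ncgen g \<in> fa_on S"
  by (simp add: fa_on_def ncgen_def ncword_def)

lemma fa_on_sum:
  "(\<And>i. i \<in> A \<Longrightarrow> (f i :: ('g, 'a::comm_ring_1) nc) \<in> fa_on S) \<Longrightarrow> sum f A \<in> fa_on S"
  by (induct A rule: infinite_finite_induct) (auto intro: fa_on_add fa_on_ncconst[of 0, simplified])

lemma fa_on_prod_list:
  "(\<And>x. x \<in> set xs \<Longrightarrow> x \<in> fa_on S) \<Longrightarrow> prod_list xs \<in> (fa_on S :: ('g, 'a::comm_ring_1) nc set)"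
  by (induct xs) (auto intro: fa_on_mult fa_on_1)

lemma fa_on_power: "x \<in> fa_on S \<Longrightarrow> x ^ k \<in> (fa_on S :: ('g, 'a::comm_ring_1) nc set)"
  by (induct k) (simp_all add: fa_on_1 fa_on_mult)

lemma fa_on_nc_subst:
  assumes "x \<in> fa_on S" "\<And>g. g \<in> S \<Longrightarrow> f g \<in> fa_on T"
  shows "nc_subst f x \<in> fa_on T"
  unfolding nc_subst_def ncmul_eq ncprod_eq
proof (intro fa_on_sum fa_on_mult fa_on_ncconst fa_on_prod_list)
  fix w y
  assume "w \<in> Poly_Mapping.keys x" "y \<in> set (map f w)"
  moreover have "set w \<subseteq> S" using assms(1) \<open>w \<in> _\<close> by (auto simp: fa_on_def)
  ultimately show "y \<in> fa_on T" using assms(2) by auto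
qed

text \<open>Killing the generators outside S is a retraction onto fa_on S that maps the full ideal
  onto the ideal over S, provided the relations live in fa_on S.\<close>

definition restrict_gens :: "'g set \<Rightarrow> ('g, 'a::comm_ring_1) nc \<Rightarrow> ('g, 'a) nc" where
  "restrict_gens S = nc_subst (\<lambda>g. if g \<in> S then ncgen g else 0)"

lemma prod_list_restrict_gens:
  "prod_list (map (\<lambda>g. if g \<in> S then ncgen g else 0) w) =
     (if set w \<subseteq> S then ncword w else (0::('g, 'a::comm_ring_1) nc))"
  by (induct w) (auto simp: ncword_Cons)

lemma restrict_gens_ncword: "restrict_gens S (ncword w) = (if set w \<subseteq> S then ncword w else 0)"
  by (simp only: restrict_gens_def nc_subst_ncword prod_list_restrict_gens)

lemma restrict_gens_fa_on:
  assumes "x \<in> fa_on S"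
  shows "restrict_gens S x = x"
proof -
  have "restrict_gens S x = (\<Sum>w\<in>Poly_Mapping.keys x. ncconst (Poly_Mapping.lookup x w) * ncword w)"
    unfolding restrict_gens_def nc_subst_def ncmul_eq ncprod_eq using assms
    by (intro sum.cong refl) (auto simp: fa_on_def prod_list_restrict_gens)
  then show ?thesis by (simp only: sum_ncconst_mult_ncword)
qed

lemma restrict_gens_full_ideal:
  assumes "x \<in> full_ideal Rel" "Rel \<subseteq> fa_on S"
  shows "restrict_gens S x \<in> nc_ideal S Rel"
  using assms(1)
proof (induct rule: nc_ideal.induct)
  case (gen v w \<rho> c)
  have "restrict_gens S \<rho> = \<rho>" using gen assms(2) restrict_gens_fa_on by blast
  then have "restrict_gens S (ncconst c * (ncword v * (\<rho> * ncword w)))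
      = ncconst c * (restrict_gens S (ncword v) * (\<rho> * restrict_gens S (ncword w)))"
    by (simp only: restrict_gens_def nc_subst_mult nc_subst_ncconst)
  then show ?case
    using gen unfolding ncmul_eq by (auto simp: restrict_gens_ncword nc_ideal_gen_mult nc_ideal.zero)
qed (simp_all add: restrict_gens_def nc_subst_add nc_ideal.zero nc_ideal.add)

lemma full_ideal_imp_nc_ideal:
  "x \<in> full_ideal Rel \<Longrightarrow> Rel \<subseteq> fa_on S \<Longrightarrow> x \<in> fa_on S \<Longrightarrow> x \<in> nc_ideal S Rel"
  using restrict_gens_full_ideal restrict_gens_fa_on by metis

text \<open>The conclusion says that f induces an isomorphism from the algebra presented by S and
  Rel onto the one presented by S' and Rel'.\<close>

theorem nc_subst_presentation_iso:
  fixes f :: "'g \<Rightarrow> ('h, 'a::comm_ring_1) nc" and g :: "'h \<Rightarrow> ('g, 'a) nc"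
  assumes f_gens: "\<And>a. a \<in> S \<Longrightarrow> f a \<in> fa_on S'"
    and g_gens: "\<And>b. b \<in> S' \<Longrightarrow> g b \<in> fa_on S"
    and g_f: "\<And>a. nc_subst g (f a) = ncgen a"
    and f_g: "\<And>b. nc_subst f (g b) = ncgen b"
    and f_rels: "\<And>\<rho>. \<rho> \<in> Rel \<Longrightarrow> nc_subst f \<rho> \<in> full_ideal Rel'"
    and g_rels: "\<And>\<rho>. \<rho> \<in> Rel' \<Longrightarrow> nc_subst g \<rho> \<in> full_ideal Rel"
    and Rel: "Rel \<subseteq> fa_on S" and Rel': "Rel' \<subseteq> fa_on S'"
  shows "(\<forall>x\<in>fa_on S. nc_subst f x \<in> nc_ideal S' Rel' \<longleftrightarrow> x \<in> nc_ideal S Rel)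
       \<and> (\<forall>y\<in>fa_on S'. \<exists>x\<in>fa_on S. y - nc_subst f x \<in> nc_ideal S' Rel')"
proof -
  have gf: "nc_subst g (nc_subst f x) = x" and fg: "nc_subst f (nc_subst g y) = y" for x y
    by (simp_all add: nc_subst_nc_subst g_f f_g nc_subst_ncgen_id)
  show ?thesis
  proof (intro conjI ballI iffI)
    fix x :: "('g, 'a) nc" assume x: "x \<in> fa_on S"
    show "x \<in> nc_ideal S Rel" if "nc_subst f x \<in> nc_ideal S' Rel'"
      using nc_subst_full_ideal[OF nc_ideal_subset_full_ideal[OF that] g_rels] Rel x
      by (simp add: gf full_ideal_imp_nc_ideal)
    show "nc_subst f x \<in> nc_ideal S' Rel'" if "x \<in> nc_ideal S Rel"
      using nc_subst_full_ideal[OF nc_ideal_subset_full_ideal[OF that] f_rels] Rel'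
        fa_on_nc_subst[OF x f_gens] by (simp add: full_ideal_imp_nc_ideal)
  next
    fix y :: "('h, 'a) nc" assume y: "y \<in> fa_on S'"
    show "\<exists>x\<in>fa_on S. y - nc_subst f x \<in> nc_ideal S' Rel'"
      using fa_on_nc_subst[OF y g_gens]
      by (intro bexI[of _ "nc_subst g y"]) (simp_all add: fg nc_ideal.zero)
  qed
qed

section \<open>Lagrange interpolation at unit-separated nodes\<close>

lemma ring_inv_right:
  assumes "(x::'a::comm_ring_1) dvd 1"
  shows "x * ring_inv x = 1"
proof -
  obtain k where k: "1 = x * k" using assms by (auto elim: dvdE)
  have "\<exists>!y. x * y = 1"
  proof
    show "x * k = 1" using k by simp
    fix y assume "x * y = 1"
    then have "k = y * (x * k)" by (simp add: mult.commute mult.left_commute)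
    then show "y = k" using k by simp
  qed
  then show ?thesis unfolding ring_inv_def by (rule theI')
qed

lemma ring_inv_left: "(x::'a::comm_ring_1) dvd 1 \<Longrightarrow> ring_inv x * x = 1"
  using ring_inv_right by (metis mult.commute)

lemma ring_inv_sq_cancel: "(x::'a::comm_ring_1) dvd 1 \<Longrightarrow> ring_inv x ^ 2 * (y * (x * x)) = y"
  by (metis (no_types, lifting) mult.assoc mult.commute mult_1_right power2_eq_square ring_inv_right)

definition lin :: "'a::comm_ring_1 \<Rightarrow> 'a poly" where
  "lin a = [:- a, 1:]"

definition node_poly :: "(nat \<Rightarrow> 'a::comm_ring_1) \<Rightarrow> nat \<Rightarrow> 'a poly" where
  "node_poly u r = prod_list (map (\<lambda>j. lin (u j)) [1..<Suc r])"

definition lagrange :: "(nat \<Rightarrow> 'a::comm_ring_1) \<Rightarrow> nat \<Rightarrow> nat \<Rightarrow> 'a poly" where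
  "lagrange u r c =
     prod_list (map (\<lambda>j. smult (ring_inv (u c - u j)) (lin (u j))) (filter (\<lambda>j. j \<noteq> c) [1..<Suc r]))"

lemma poly_prod_list_map: "poly (prod_list (map F xs)) y = prod_list (map (\<lambda>j. poly (F j) y) xs)"
  by (induct xs) simp_all

lemma poly_lin [simp]: "poly (lin a) x = x - a"
  by (simp add: lin_def)

lemma degree_lin [simp]: "degree (lin a) = 1"
  by (simp add: lin_def)

lemma prod_lin_dvd:
  fixes p :: "'a::idom poly"
  assumes "distinct (map u js)" "\<And>j. j \<in> set js \<Longrightarrow> poly p (u j) = 0"
  shows "prod_list (map (\<lambda>j. lin (u j)) js) dvd p"
  using assms
proof (induct js arbitrary: p)
  case (Cons a js)
  have "lin (u a) dvd p" using Cons.prems(2)[of a] by (simp add: lin_def poly_eq_0_iff_dvd)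
  then obtain p' where p': "p = lin (u a) * p'" by (elim dvdE)
  have "poly p' (u j) = 0" if "j \<in> set js" for j
  proof -
    have "u a \<notin> u ` set js" using Cons.prems(1) by simp
    then have "u j \<noteq> u a" using that by (metis image_eqI)
    moreover have "poly p (u j) = 0" using Cons.prems(2) that by simp
    ultimately show ?thesis using p' by simp
  qed
  then have "prod_list (map (\<lambda>j. lin (u j)) js) dvd p'" using Cons by simp
  then show ?case using p' by simp
qed simp

locale distinct_nodes =
  fixes u :: "nat \<Rightarrow> 'a::idom" and r :: nat
  assumes r_pos: "r \<ge> 1" and Delta_unit: "Delta u r dvd 1"
begin

lemma node_diff_unit:
  assumes "c \<in> {1..r}" "d \<in> {1..r}" "c \<noteq> d"
  shows "(u c - u d) dvd 1"
proof -
  have *: "(u i - u j) dvd 1" if "j \<in> {1..r}" "i \<in> {j<..r}" for i j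
  proof -
    have "(u i - u j) dvd (\<Prod>i\<in>{j<..r}. (u i - u j))" using that by (intro dvd_prodI) auto
    also have "\<dots> dvd Delta u r" unfolding Delta_def using that by (intro dvd_prodI) auto
    finally show ?thesis using Delta_unit by (rule dvd_trans)
  qed
  show ?thesis
  proof (cases "d < c")
    case False
    then have "(u d - u c) dvd 1" using * assms by auto
    then show ?thesis by (metis minus_diff_eq minus_dvd_iff)
  qed (use * assms in auto)
qed

lemma inj_on_nodes: "inj_on u {1..r}"
  using node_diff_unit by (fastforce simp: inj_on_def)

lemma node_poly_dvd:
  fixes p :: "'a poly"
  assumes "\<And>j. j \<in> {1..r} \<Longrightarrow> poly p (u j) = 0"
  shows "node_poly u r dvd p"
  unfolding node_poly_def
  using assms inj_on_nodes
  by (intro prod_lin_dvd) (simp_all add: distinct_map atLeastLessThanSuc_atLeastAtMost del: upt_Suc)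

lemma poly_eq_on_nodes:
  fixes p q :: "'a poly"
  assumes "degree p < r" "degree q < r" "\<And>c. c \<in> {1..r} \<Longrightarrow> poly p (u c) = poly q (u c)"
  shows "p = q"
proof (rule poly_eqI_degree)
  show "card (u ` {1..r}) > degree p" "card (u ` {1..r}) > degree q"
    using assms(1,2) inj_on_nodes by (simp_all add: card_image)
qed (use assms(3) in auto)

lemma poly_lagrange:
  assumes "c \<in> {1..r}" "d \<in> {1..r}"
  shows "poly (lagrange u r c) (u d) = (if c = d then 1 else 0)"
proof (cases "c = d")
  case True
  have "poly (lagrange u r c) (u d) =
      prod_list (map (\<lambda>j. ring_inv (u c - u j) * (u c - u j)) (filter (\<lambda>j. j \<noteq> c) [1..<Suc r]))"
    using True by (simp add: lagrange_def poly_prod_list_map o_def del: upt_Suc)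
  also have "\<dots> = prod_list (map (\<lambda>j. 1) (filter (\<lambda>j. j \<noteq> c) [1..<Suc r]))"
    using assms
    by (intro arg_cong[where f=prod_list] map_cong refl ring_inv_left node_diff_unit)
       (auto simp del: upt_Suc)
  finally show ?thesis using True by (simp add: map_replicate_const del: upt_Suc)
next
  case False
  then have "d \<in> set (filter (\<lambda>j. j \<noteq> c) [1..<Suc r])" using assms by auto
  then show ?thesis
    using False by (force simp: lagrange_def poly_prod_list_map o_def prod_list_zero_iff simp del: upt_Suc)
qed

lemma degree_lagrange:
  assumes "c \<in> {1..r}"
  shows "degree (lagrange u r c) < r"
proof -
  let ?js = "filter (\<lambda>j. j \<noteq> c) [1..<Suc r]"
  have "degree (lagrange u r c) \<le>
      sum_list (map degree (map (\<lambda>j. smult (ring_inv (u c - u j)) (lin (u j))) ?js))"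
    unfolding lagrange_def by (rule degree_prod_list_le)
  also have "\<dots> \<le> sum_list (map (\<lambda>j. 1) ?js)"
    unfolding map_map o_def by (intro sum_list_mono) (metis degree_lin degree_smult_le)
  also have "\<dots> = card (set ?js)"
    by (subst distinct_card) (simp_all add: sum_list_triv del: upt_Suc)
  also have "set ?js = {1..r} - {c}" by auto
  finally show ?thesis using assms by simp linarith
qed

lemma sum_lagrange: "(\<Sum>c\<in>{1..r}. lagrange u r c) = 1"
proof (rule poly_eq_on_nodes)
  show "degree (\<Sum>c\<in>{1..r}. lagrange u r c) < r"
    using r_pos degree_lagrange by (intro degree_sum_less) auto
  fix d assume d: "d \<in> {1..r}"
  have "(\<Sum>c\<in>{1..r}. poly (lagrange u r c) (u d)) = (\<Sum>c\<in>{1..r}. if c = d then 1 else 0)"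
    using d by (intro sum.cong refl) (simp add: poly_lagrange)
  then show "poly (\<Sum>c\<in>{1..r}. lagrange u r c) (u d) = poly 1 (u d)"
    using d by (simp add: poly_sum)
qed (use r_pos in simp)

lemma node_poly_dvd_interpolation:
  "node_poly u r dvd (p - (\<Sum>c\<in>{1..r}. smult (poly p (u c)) (lagrange u r c)))"
proof (rule node_poly_dvd)
  fix d assume d: "d \<in> {1..r}"
  have "(\<Sum>c\<in>{1..r}. poly p (u c) * poly (lagrange u r c) (u d)) =
      (\<Sum>c\<in>{1..r}. if c = d then poly p (u d) else 0)"
    using d by (intro sum.cong refl) (simp add: poly_lagrange)
  then show "poly (p - (\<Sum>c\<in>{1..r}. smult (poly p (u c)) (lagrange u r c))) (u d) = 0"
    using d by (simp add: poly_sum)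
qed

lemma node_poly_dvd_lagrange_mult:
  assumes "c \<in> {1..r}" "d \<in> {1..r}"
  shows "node_poly u r dvd (lagrange u r c * lagrange u r d - (if c = d then lagrange u r c else 0))"
  using assms by (intro node_poly_dvd) (auto simp: poly_lagrange)

lemma Fpoly_eq_smult_lagrange:
  assumes "c \<in> {1..r}"
  shows "Fpoly u r c = smult (Delta u r) (lagrange u r c)"
  unfolding Fpoly_def
proof (rule the1_equality)
  let ?P = "\<lambda>p. degree p \<le> r - 1 \<and> (\<forall>c'\<in>{1..r}. poly p (u c') = (if c = c' then Delta u r else 0))"
  have deg: "degree (smult (Delta u r) (lagrange u r c)) < r"
    using degree_smult_le[of "Delta u r" "lagrange u r c"] degree_lagrange[OF assms] by linarith
  show P: "?P (smult (Delta u r) (lagrange u r c))"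
    using assms deg by (auto simp: poly_lagrange)
  show "\<exists>!p. ?P p"
  proof (rule ex1I[of _ "smult (Delta u r) (lagrange u r c)"])
    fix p assume p: "?P p"
    show "p = smult (Delta u r) (lagrange u r c)"
      using p assms r_pos deg by (intro poly_eq_on_nodes) (auto simp: poly_lagrange)
  qed (fact P)
qed

end

lemma ncpoly_eq_sum_le:
  assumes "degree p \<le> N"
  shows "ncpoly p x = (\<Sum>i\<le>N. ncconst (coeff p i) * x ^ i)"
  unfolding ncpoly_def ncmul_eq ncpow_eq
  by (rule sum.mono_neutral_left) (use assms in \<open>auto simp: coeff_eq_0\<close>)

lemma ncpoly_0 [simp]: "ncpoly 0 x = 0"
  by (simp add: ncpoly_def)

lemma ncpoly_pCons: "ncpoly (pCons a p) x = ncconst a + x * ncpoly p x"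
proof -
  have "ncpoly (pCons a p) x = (\<Sum>i\<le>Suc (degree p). ncconst (coeff (pCons a p) i) * x ^ i)"
    by (rule ncpoly_eq_sum_le) (simp add: degree_pCons_le)
  also have "\<dots> = ncconst a + (\<Sum>i\<le>degree p. ncconst (coeff p i) * x ^ Suc i)"
    unfolding sum.atMost_Suc_shift by simp
  also have "\<dots> = ncconst a + x * ncpoly p x"
    by (simp add: ncpoly_def sum_distrib_left ncconst_left_commute)
  finally show ?thesis .
qed

lemma ncpoly_add: "ncpoly (p + q) x = ncpoly p x + ncpoly q x"
proof -
  let ?N = "max (degree p) (degree q)"
  have "ncpoly (p + q) x = (\<Sum>i\<le>?N. ncconst (coeff (p + q) i) * x ^ i)"
    by (rule ncpoly_eq_sum_le) (rule degree_add_le_max)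
  also have "\<dots> = (\<Sum>i\<le>?N. ncconst (coeff p i) * x ^ i) + (\<Sum>i\<le>?N. ncconst (coeff q i) * x ^ i)"
    by (simp add: ncconst_add distrib_right sum.distrib)
  also have "\<dots> = ncpoly p x + ncpoly q x"
    by (simp add: ncpoly_eq_sum_le[symmetric])
  finally show ?thesis .
qed

lemma ncpoly_smult: "ncpoly (smult a p) x = ncconst a * ncpoly p x"
proof -
  have "ncpoly (smult a p) x = (\<Sum>i\<le>degree p. ncconst (coeff (smult a p) i) * x ^ i)"
    by (rule ncpoly_eq_sum_le) (rule degree_smult_le)
  also have "\<dots> = ncconst a * ncpoly p x"
    by (simp add: ncpoly_def sum_distrib_left ncconst_mult mult.assoc)
  finally show ?thesis .
qed

lemma ncpoly_diff: "ncpoly (p - q) x = ncpoly p x - ncpoly q x"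
  by (metis add_diff_cancel_right' eq_diff_eq ncpoly_add)

lemma ncpoly_mult: "ncpoly (p * q) x = ncpoly p x * ncpoly q x"
proof (induct p rule: pCons_induct)
  case (pCons a p)
  have "ncpoly (pCons a p * q) x = ncconst a * ncpoly q x + x * ncpoly (p * q) x"
    by (simp add: ncpoly_add ncpoly_smult ncpoly_pCons)
  also have "\<dots> = (ncconst a + x * ncpoly p x) * ncpoly q x"
    using pCons(2) by (simp add: distrib_right mult.assoc)
  finally show ?case by (simp add: ncpoly_pCons)
qed simp

lemma ncpoly_const [simp]: "ncpoly [:a:] x = ncconst a"
  by (simp add: ncpoly_pCons)

lemma ncpoly_1 [simp]: "ncpoly 1 x = 1"
  using ncpoly_const[of 1 x] by (simp add: one_pCons)

lemma ncpoly_X: "ncpoly [:0, 1:] x = x"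
  by (simp add: ncpoly_pCons)

lemma ncpoly_lin: "ncpoly (lin a) x = x - ncconst a"
  by (simp add: lin_def ncpoly_pCons ncconst_uminus)

lemma ncpoly_prod_list: "ncpoly (prod_list (map F xs)) x = prod_list (map (\<lambda>j. ncpoly (F j) x) xs)"
  by (induct xs) (simp_all add: ncpoly_mult)

lemma ncpoly_sum: "ncpoly (sum F A) x = (\<Sum>a\<in>A. ncpoly (F a) x)"
  by (induct A rule: infinite_finite_induct) (simp_all add: ncpoly_add)

lemma nc_subst_ncpoly: "nc_subst f (ncpoly p x) = ncpoly p (nc_subst f x)"
  by (simp add: ncpoly_def nc_subst_sum nc_subst_mult nc_subst_power)

lemma fa_on_ncpoly: "x \<in> fa_on S \<Longrightarrow> ncpoly p x \<in> (fa_on S :: ('g, 'a::comm_ring_1) nc set)"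
  unfolding ncpoly_def by (simp add: fa_on_sum fa_on_mult fa_on_ncconst fa_on_power)

lemma prod_list_sum_PiE:
  fixes F :: "nat \<Rightarrow> nat \<Rightarrow> 'b::semiring_1"
  assumes "distinct ys" "finite C"
  shows "prod_list (map (\<lambda>i. \<Sum>c\<in>C. F i c) ys) =
    (\<Sum>g\<in>PiE (set ys) (\<lambda>_. C). prod_list (map (\<lambda>i. F i (g i)) ys))"
  using assms
proof (induct ys)
  case (Cons y ys)
  have ny: "y \<notin> set ys" using Cons by simp
  have e: "PiE (set (y # ys)) (\<lambda>_. C) = (\<lambda>(c, g). g(y := c)) ` (C \<times> PiE (set ys) (\<lambda>_. C))"
    using PiE_insert_eq[of y "set ys" "\<lambda>_. C"] by simp
  have m: "map (\<lambda>i. F i ((g(y := c)) i)) ys = map (\<lambda>i. F i (g i)) ys" for g c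
    using ny by (intro map_cong) auto
  have "(\<Sum>g\<in>PiE (set (y # ys)) (\<lambda>_. C). prod_list (map (\<lambda>i. F i (g i)) (y # ys)))
      = (\<Sum>x\<in>C \<times> PiE (set ys) (\<lambda>_. C).
           ((\<lambda>g. prod_list (map (\<lambda>i. F i (g i)) (y # ys))) \<circ> (\<lambda>(c, g). g(y := c))) x)"
    unfolding e by (rule sum.reindex[OF inj_combinator[OF ny, of "\<lambda>_. C"]])
  also have "\<dots> = (\<Sum>(c, g)\<in>C \<times> PiE (set ys) (\<lambda>_. C). F y c * prod_list (map (\<lambda>i. F i (g i)) ys))"
    by (intro sum.cong refl) (clarsimp simp only: comp_apply case_prod_conv list.map prod_list.Cons m fun_upd_same)
  also have "\<dots> = (\<Sum>c\<in>C. F y c) * (\<Sum>g\<in>PiE (set ys) (\<lambda>_. C). prod_list (map (\<lambda>i. F i (g i)) ys))"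
    by (simp add: sum.cartesian_product[symmetric] sum_product)
  finally show ?case using Cons by simp
qed simp

locale nc_congruence =
  fixes Rel :: "('g, 'a::idom) nc set"
begin

definition eqv :: "('g, 'a) nc \<Rightarrow> ('g, 'a) nc \<Rightarrow> bool" (infix \<open>\<approx>\<close> 50)
  where "x \<approx> y \<longleftrightarrow> x - y \<in> full_ideal Rel"

lemma eqv_refl [simp, intro]: "x \<approx> x"
  by (simp add: eqv_def nc_ideal.zero)

lemma eqv_sym: "x \<approx> y \<Longrightarrow> y \<approx> x"
  unfolding eqv_def using full_ideal_uminus by fastforce

lemma eqv_trans [trans]: "x \<approx> y \<Longrightarrow> y \<approx> z \<Longrightarrow> x \<approx> z"
  unfolding eqv_def using nc_ideal.add by fastforce

lemma eqv_trans_eq1 [trans]: "x = y \<Longrightarrow> y \<approx> z \<Longrightarrow> x \<approx> z"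
  by simp

lemma eqv_trans_eq2 [trans]: "x \<approx> y \<Longrightarrow> y = z \<Longrightarrow> x \<approx> z"
  by simp

lemma eqv_add: "x \<approx> x' \<Longrightarrow> y \<approx> y' \<Longrightarrow> x + y \<approx> x' + y'"
  unfolding eqv_def using nc_ideal.add by (fastforce simp: algebra_simps)

lemma eqv_uminus: "x \<approx> x' \<Longrightarrow> - x \<approx> - x'"
  unfolding eqv_def using full_ideal_uminus by (fastforce simp: algebra_simps)

lemma eqv_diff: "x \<approx> x' \<Longrightarrow> y \<approx> y' \<Longrightarrow> x - y \<approx> x' - y'"
  unfolding diff_conv_add_uminus by (intro eqv_add eqv_uminus)

lemma eqv_mult:
  assumes "x \<approx> x'" "y \<approx> y'"
  shows "x * y \<approx> x' * y'"
proof -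
  have "x * y - x' * y' = (x - x') * y + x' * (y - y')" by (simp add: algebra_simps)
  then show ?thesis
    using assms unfolding eqv_def by (simp add: nc_ideal.add full_ideal_mult_left full_ideal_mult_right)
qed

lemma eqv_mult_left: "y \<approx> y' \<Longrightarrow> x * y \<approx> x * y'"
  by (rule eqv_mult) auto

lemma eqv_mult_right: "x \<approx> x' \<Longrightarrow> x * y \<approx> x' * y"
  by (rule eqv_mult) auto

lemma eqv_sum: "(\<And>i. i \<in> A \<Longrightarrow> f i \<approx> g i) \<Longrightarrow> sum f A \<approx> sum g A"
  by (induct A rule: infinite_finite_induct) (auto intro: eqv_add)

lemma eqv_prod_list:
  "(\<And>i. i \<in> set xs \<Longrightarrow> f i \<approx> g i) \<Longrightarrow> prod_list (map f xs) \<approx> prod_list (map g xs)"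
  by (induct xs) (auto intro: eqv_mult)

lemma eqv_iff_diff_eqv_0: "x \<approx> y \<longleftrightarrow> x - y \<approx> 0"
  by (simp add: eqv_def)

lemma rel_eqv_0: "\<rho> \<in> Rel \<Longrightarrow> \<rho> \<approx> 0"
  by (simp add: eqv_def nc_ideal_rel)

definition commutes :: "('g, 'a) nc \<Rightarrow> ('g, 'a) nc \<Rightarrow> bool" where
  "commutes a b \<longleftrightarrow> a * b \<approx> b * a"

lemma commutes_sym: "commutes a b \<Longrightarrow> commutes b a"
  by (simp add: commutes_def eqv_sym)

lemma commutes_ncconst: "commutes a (ncconst c)"
  by (simp add: commutes_def ncconst_commute)

lemma commutes_add: "commutes a x \<Longrightarrow> commutes a y \<Longrightarrow> commutes a (x + y)"
  unfolding commutes_def by (simp add: distrib_left distrib_right eqv_add)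

lemma commutes_mult:
  assumes "commutes a x" "commutes a y"
  shows "commutes a (x * y)"
proof -
  have "a * (x * y) = (a * x) * y" by (simp add: mult.assoc)
  also have "\<dots> \<approx> (x * a) * y" using assms by (simp add: commutes_def eqv_mult_right)
  also have "(x * a) * y = x * (a * y)" by (simp add: mult.assoc)
  also have "\<dots> \<approx> x * (y * a)" using assms by (simp add: commutes_def eqv_mult_left)
  finally show ?thesis by (simp add: commutes_def mult.assoc)
qed

lemma commutes_ncpoly:
  assumes "commutes a x"
  shows "commutes a (ncpoly p x)"
proof (induct p rule: pCons_induct)
  case 0
  show ?case using commutes_ncconst[of a 0] by simp
next
  case (pCons c p)
  then show ?case by (simp add: ncpoly_pCons commutes_add commutes_ncconst commutes_mult assms)
qed

lemma commutes_ncpoly_ncpoly: "commutes x y \<Longrightarrow> commutes (ncpoly p x) (ncpoly p' y)"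
  by (rule commutes_sym, rule commutes_ncpoly, rule commutes_sym, rule commutes_ncpoly)

lemma intertwines_ncpoly:
  assumes "X * x \<approx> y * X"
  shows "X * ncpoly p x \<approx> ncpoly p y * X"
proof (induct p rule: pCons_induct)
  case (pCons a p)
  have "X * ncpoly (pCons a p) x = ncconst a * X + (X * x) * ncpoly p x"
    by (simp add: ncpoly_pCons distrib_left ncconst_commute mult.assoc)
  also have "\<dots> \<approx> ncconst a * X + (y * X) * ncpoly p x"
    by (intro eqv_add eqv_mult_right assms eqv_refl)
  also have "\<dots> = ncconst a * X + y * (X * ncpoly p x)"
    by (simp add: mult.assoc)
  also have "\<dots> \<approx> ncconst a * X + y * (ncpoly p y * X)"
    by (intro eqv_add eqv_mult_left pCons(2) eqv_refl)
  also have "\<dots> = ncpoly (pCons a p) y * X"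
    by (simp add: ncpoly_pCons distrib_right mult.assoc)
  finally show ?case .
qed simp

lemma intertwines_prod_list:
  assumes "\<And>j. j \<in> set xs \<Longrightarrow> X * f j \<approx> g j * X"
  shows "X * prod_list (map f xs) \<approx> prod_list (map g xs) * X"
  using assms
proof (induct xs)
  case (Cons x xs)
  have "X * prod_list (map f (x # xs)) = (X * f x) * prod_list (map f xs)"
    by (simp add: mult.assoc)
  also have "\<dots> \<approx> (g x * X) * prod_list (map f xs)"
    by (intro eqv_mult_right Cons.prems) simp
  also have "\<dots> = g x * (X * prod_list (map f xs))"
    by (simp add: mult.assoc)
  also have "\<dots> \<approx> g x * (prod_list (map g xs) * X)"
    using Cons by (intro eqv_mult_left) simp
  also have "\<dots> = prod_list (map g (x # xs)) * X"
    by (simp add: mult.assoc)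
  finally show ?case .
qed simp

end

section \<open>A complete family of orthogonal idempotents\<close>

lemma finite_Kset: "finite (Kset n r)"
  by (simp add: Kset_def finite_PiE)

lemma Kset_range: "k \<in> Kset n r \<Longrightarrow> i \<in> {1..n} \<Longrightarrow> k i \<in> {1..r}"
  by (auto simp: Kset_def PiE_def Pi_def)

lemma Kset_eqI: "k \<in> Kset n r \<Longrightarrow> l \<in> Kset n r \<Longrightarrow> (\<And>i. i \<in> {1..n} \<Longrightarrow> k i = l i) \<Longrightarrow> k = l"
  unfolding Kset_def by (rule PiE_ext)

locale split_family = nc_congruence Rel + distinct_nodes u r
  for Rel :: "('g, 'a::idom) nc set" and u r +
  fixes n :: nat and t :: "nat \<Rightarrow> ('g, 'a) nc"
  assumes t_commute: "i \<in> {1..n} \<Longrightarrow> j \<in> {1..n} \<Longrightarrow> t i * t j \<approx> t j * t i"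
    and t_annihilated:
      "i \<in> {1..n} \<Longrightarrow> prod_list (map (\<lambda>c. t i - ncconst (u c)) [1..<Suc r]) \<in> full_ideal Rel"
begin

definition idem :: "nat \<Rightarrow> nat \<Rightarrow> ('g, 'a) nc" where
  "idem i c = ncpoly (lagrange u r c) (t i)"

abbreviation b :: "(nat \<Rightarrow> nat) \<Rightarrow> ('g, 'a) nc" where
  "b k \<equiv> bk u r n t k"

abbreviation K :: "(nat \<Rightarrow> nat) set" where
  "K \<equiv> Kset n r"

lemma ncpoly_t_cong:
  assumes "i \<in> {1..n}" "node_poly u r dvd (p - p')"
  shows "ncpoly p (t i) \<approx> ncpoly p' (t i)"
proof -
  obtain h where h: "p - p' = node_poly u r * h" using assms(2) by (elim dvdE)
  have "ncpoly (node_poly u r) (t i) \<in> full_ideal Rel"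
    using t_annihilated[OF assms(1)] by (simp add: node_poly_def ncpoly_prod_list ncpoly_lin)
  moreover have "ncpoly p (t i) - ncpoly p' (t i) = ncpoly (node_poly u r) (t i) * ncpoly h (t i)"
    by (simp flip: ncpoly_diff ncpoly_mult add: h)
  ultimately show ?thesis unfolding eqv_def by (simp add: full_ideal_mult_right)
qed

lemma idem_mult_idem:
  assumes "i \<in> {1..n}" "c \<in> {1..r}" "d \<in> {1..r}"
  shows "idem i c * idem i d \<approx> (if c = d then idem i c else 0)"
proof -
  have "idem i c * idem i d = ncpoly (lagrange u r c * lagrange u r d) (t i)"
    by (simp add: idem_def ncpoly_mult)
  also have "\<dots> \<approx> ncpoly (if c = d then lagrange u r c else 0) (t i)"
    using assms by (intro ncpoly_t_cong node_poly_dvd_lagrange_mult)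
  also have "ncpoly (if c = d then lagrange u r c else 0) (t i) = (if c = d then idem i c else 0)"
    by (simp add: idem_def)
  finally show ?thesis .
qed

lemma sum_idem: "(\<Sum>c\<in>{1..r}. idem i c) = 1"
proof -
  have "(\<Sum>c\<in>{1..r}. idem i c) = ncpoly (\<Sum>c\<in>{1..r}. lagrange u r c) (t i)"
    by (simp only: idem_def ncpoly_sum)
  then show ?thesis by (simp only: sum_lagrange ncpoly_1)
qed

lemma ncpoly_t_eqv_sum_idem:
  assumes "i \<in> {1..n}"
  shows "ncpoly p (t i) \<approx> (\<Sum>c\<in>{1..r}. ncconst (poly p (u c)) * idem i c)"
  using ncpoly_t_cong[OF assms node_poly_dvd_interpolation]
  by (simp add: ncpoly_sum ncpoly_smult idem_def)

lemma commutes_idem: "i \<in> {1..n} \<Longrightarrow> j \<in> {1..n} \<Longrightarrow> commutes (idem i c) (idem j d)"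
  unfolding idem_def by (intro commutes_ncpoly_ncpoly) (simp add: commutes_def t_commute)

lemma bk_eq_prod_idem: "b k = prod_list (map (\<lambda>i. idem i (k i)) [1..<Suc n])"
  unfolding bk_def idem_def lagrange_def
  by (simp add: ncpoly_prod_list ncpoly_smult ncpoly_lin o_def del: upt_Suc)

lemma idem_mult_prod_idem:
  assumes "i \<in> set ys" "set ys \<subseteq> {1..n}" "c \<in> {1..r}" "\<And>j. j \<in> set ys \<Longrightarrow> l j \<in> {1..r}"
  shows "idem i c * prod_list (map (\<lambda>j. idem j (l j)) ys)
    \<approx> (if l i = c then prod_list (map (\<lambda>j. idem j (l j)) ys) else 0)"
  using assms
proof (induct ys)
  case (Cons y ys)
  show ?case
  proof (cases "y = i")
    case True
    have "idem i c * prod_list (map (\<lambda>j. idem j (l j)) (y # ys)) =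
        (idem i c * idem i (l i)) * prod_list (map (\<lambda>j. idem j (l j)) ys)"
      using True by (simp add: mult.assoc)
    also have "\<dots> \<approx> (if c = l i then idem i c else 0) * prod_list (map (\<lambda>j. idem j (l j)) ys)"
      using Cons.prems True by (intro eqv_mult_right idem_mult_idem) auto
    finally show ?thesis using True by (cases "c = l i") auto
  next
    case False
    then have iy: "i \<in> set ys" using Cons.prems by simp
    have "idem i c * prod_list (map (\<lambda>j. idem j (l j)) (y # ys)) =
        (idem i c * idem y (l y)) * prod_list (map (\<lambda>j. idem j (l j)) ys)"
      by (simp add: mult.assoc)
    also have "\<dots> \<approx> (idem y (l y) * idem i c) * prod_list (map (\<lambda>j. idem j (l j)) ys)"
      using Cons.prems iy commutes_idem[of i y c "l y"]
      by (intro eqv_mult_right) (auto simp: commutes_def)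
    also have "\<dots> = idem y (l y) * (idem i c * prod_list (map (\<lambda>j. idem j (l j)) ys))"
      by (simp add: mult.assoc)
    also have "\<dots> \<approx> idem y (l y) * (if l i = c then prod_list (map (\<lambda>j. idem j (l j)) ys) else 0)"
      using Cons.prems iy by (intro eqv_mult_left Cons.hyps) auto
    finally show ?thesis by auto
  qed
qed simp

lemma idem_mult_bk:
  assumes "i \<in> {1..n}" "c \<in> {1..r}" "l \<in> K"
  shows "idem i c * b l \<approx> (if l i = c then b l else 0)"
  unfolding bk_eq_prod_idem
  by (rule idem_mult_prod_idem) (use assms Kset_range[OF assms(3)] in \<open>auto simp del: upt_Suc\<close>)

lemma prod_idem_mult_bk:
  assumes "set ys \<subseteq> {1..n}" "\<And>j. j \<in> set ys \<Longrightarrow> k j \<in> {1..r}" "l \<in> K"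
  shows "prod_list (map (\<lambda>j. idem j (k j)) ys) * b l \<approx> (if \<forall>j\<in>set ys. k j = l j then b l else 0)"
  using assms
proof (induct ys)
  case (Cons y ys)
  have "prod_list (map (\<lambda>j. idem j (k j)) (y # ys)) * b l =
      idem y (k y) * (prod_list (map (\<lambda>j. idem j (k j)) ys) * b l)"
    by (simp add: mult.assoc)
  also have "\<dots> \<approx> idem y (k y) * (if \<forall>j\<in>set ys. k j = l j then b l else 0)"
    using Cons by (intro eqv_mult_left) auto
  also have "\<dots> \<approx> (if \<forall>j\<in>set (y # ys). k j = l j then b l else 0)"
  proof (cases "\<forall>j\<in>set ys. k j = l j")
    case True
    have "idem y (k y) * b l \<approx> (if l y = k y then b l else 0)"
      using Cons.prems by (intro idem_mult_bk) auto
    then show ?thesis using True by auto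
  next
    case False
    then have "\<not> (\<forall>j\<in>set (y # ys). k j = l j)" by auto
    with False show ?thesis by (simp only: if_False if_not_P mult_zero_right eqv_refl)
  qed
  finally show ?case .
qed simp

lemma bk_mult_bk:
  assumes "k \<in> K" "l \<in> K"
  shows "b k * b l \<approx> (if k = l then b l else 0)"
proof -
  have "b k * b l \<approx> (if \<forall>j\<in>set [1..<Suc n]. k j = l j then b l else 0)"
    unfolding bk_eq_prod_idem[of k]
    by (rule prod_idem_mult_bk) (use assms Kset_range[OF assms(1)] in \<open>auto simp del: upt_Suc\<close>)
  also have "(\<forall>j\<in>set [1..<Suc n]. k j = l j) \<longleftrightarrow> k = l"
    using Kset_eqI[OF assms] by (auto simp del: upt_Suc simp: atLeastLessThanSuc_atLeastAtMost)
  finally show ?thesis .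
qed

lemma sum_bk: "(\<Sum>k\<in>K. b k) = 1"
proof -
  have "(1::('g, 'a) nc) = prod_list (map (\<lambda>i. \<Sum>c\<in>{1..r}. idem i c) [1..<Suc n])"
    by (simp only: sum_idem map_replicate_const prod_list_replicate power_one)
  also have "\<dots> = (\<Sum>g\<in>PiE (set [1..<Suc n]) (\<lambda>_. {1..r}). prod_list (map (\<lambda>i. idem i (g i)) [1..<Suc n]))"
    by (rule prod_list_sum_PiE) auto
  also have "\<dots> = (\<Sum>k\<in>K. b k)"
    by (simp add: bk_eq_prod_idem Kset_def atLeastLessThanSuc_atLeastAtMost del: upt_Suc)
  finally show ?thesis by simp
qed

text \<open>The diagonal element with coefficient function f: the image of f under the embedding
  of the function ring on K into the quotient.\<close>

definition diag :: "((nat \<Rightarrow> nat) \<Rightarrow> 'a) \<Rightarrow> ('g, 'a) nc" where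
  "diag f = (\<Sum>k\<in>K. ncconst (f k) * b k)"

lemma diag_cong: "(\<And>k. k \<in> K \<Longrightarrow> f k = g k) \<Longrightarrow> diag f = diag g"
  unfolding diag_def by (intro sum.cong) auto

lemma diag_add: "diag (\<lambda>k. f k + g k) = diag f + diag g"
  by (simp add: diag_def ncconst_add distrib_right sum.distrib)

lemma diag_diff: "diag (\<lambda>k. f k - g k) = diag f - diag g"
  by (simp add: diag_def ncconst_diff left_diff_distrib sum_subtractf)

lemma diag_uminus: "diag (\<lambda>k. - f k) = - diag f"
  by (simp add: diag_def ncconst_uminus sum_negf)

lemma ncconst_mult_diag: "ncconst a * diag f = diag (\<lambda>k. a * f k)"
  by (simp add: diag_def sum_distrib_left ncconst_mult mult.assoc)

lemma diag_0: "diag (\<lambda>k. 0) = 0"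
  by (simp add: diag_def)

lemma ncconst_eq_diag: "ncconst a = diag (\<lambda>k. a)"
  using sum_bk by (simp add: diag_def sum_distrib_left[symmetric])

lemma sum_diag: "(\<Sum>c\<in>C. diag (f c)) = diag (\<lambda>k. \<Sum>c\<in>C. f c k)"
  by (induct C rule: infinite_finite_induct) (simp_all add: diag_0 diag_add)

lemma diag_indicator:
  assumes "l \<in> K"
  shows "diag (\<lambda>k. if k = l then 1 else 0) = b l"
proof -
  have "diag (\<lambda>k. if k = l then 1 else 0) = (\<Sum>k\<in>K. if k = l then b k else 0)"
    unfolding diag_def by (intro sum.cong refl) simp
  then show ?thesis using assms by (simp add: finite_Kset)
qed

lemma sum_filter_bk: "(\<Sum>k\<in>{k\<in>K. P k}. b k) = diag (\<lambda>k. if P k then 1 else 0)"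
proof -
  have "(\<Sum>k\<in>K. ncconst (if P k then 1 else 0) * b k) = (\<Sum>k\<in>K. if P k then b k else 0)"
    by (intro sum.cong refl) simp
  then show ?thesis by (simp add: diag_def sum.inter_filter[OF finite_Kset])
qed

lemma diag_mult: "diag f * diag g \<approx> diag (\<lambda>k. f k * g k)"
proof -
  have "diag f * diag g = (\<Sum>k\<in>K. \<Sum>l\<in>K. ncconst (f k * g l) * (b k * b l))"
    unfolding diag_def sum_product by (simp only: ncconst_mult_mult)
  also have "\<dots> \<approx> (\<Sum>k\<in>K. \<Sum>l\<in>K. ncconst (f k * g l) * (if k = l then b l else 0))"
    by (rule eqv_sum, rule eqv_sum, rule eqv_mult_left, rule bk_mult_bk)
  also have "\<dots> = (\<Sum>k\<in>K. \<Sum>l\<in>K. if k = l then ncconst (f k * g l) * b l else 0)"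
    by (intro sum.cong refl) simp
  also have "\<dots> = diag (\<lambda>k. f k * g k)"
    unfolding diag_def by (intro sum.cong refl) (simp add: finite_Kset)
  finally show ?thesis .
qed

lemma eqv_diag_mult: "x \<approx> diag f \<Longrightarrow> y \<approx> diag g \<Longrightarrow> x * y \<approx> diag (\<lambda>k. f k * g k)"
  using eqv_mult diag_mult eqv_trans by blast

lemma diag_commute: "diag f * diag g \<approx> diag g * diag f"
proof -
  have "diag f * diag g \<approx> diag (\<lambda>k. g k * f k)"
    using diag_mult[of f g] by (simp add: mult.commute)
  then show ?thesis using eqv_sym[OF diag_mult[of g f]] by (rule eqv_trans)
qed

lemma diag_prod_list: "prod_list (map (\<lambda>j. diag (F j)) xs) \<approx> diag (\<lambda>k. prod_list (map (\<lambda>j. F j k) xs))"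
proof (induct xs)
  case (Cons x xs)
  have "prod_list (map (\<lambda>j. diag (F j)) (x # xs)) \<approx> diag (F x) * diag (\<lambda>k. prod_list (map (\<lambda>j. F j k) xs))"
    unfolding list.map prod_list.Cons by (rule eqv_mult_left, rule Cons)
  also have "\<dots> \<approx> diag (\<lambda>k. F x k * prod_list (map (\<lambda>j. F j k) xs))"
    by (rule diag_mult)
  finally show ?case by simp
next
  case Nil
  show ?case by (simp add: ncconst_eq_diag[of 1, symmetric])
qed

lemma idem_eqv_diag:
  assumes "i \<in> {1..n}" "c \<in> {1..r}"
  shows "idem i c \<approx> diag (\<lambda>k. if k i = c then 1 else 0)"
proof -
  have "idem i c = (\<Sum>l\<in>K. idem i c * b l)"
    by (simp add: sum_bk flip: sum_distrib_left)
  also have "\<dots> \<approx> (\<Sum>l\<in>K. if l i = c then b l else 0)"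
    using assms by (intro eqv_sum idem_mult_bk)
  also have "\<dots> = diag (\<lambda>k. if k i = c then 1 else 0)"
    unfolding diag_def by (intro sum.cong refl) simp
  finally show ?thesis .
qed

lemma ncpoly_t_eqv_diag:
  assumes "i \<in> {1..n}"
  shows "ncpoly p (t i) \<approx> diag (\<lambda>k. poly p (u (k i)))"
proof -
  have "ncpoly p (t i) \<approx> (\<Sum>c\<in>{1..r}. ncconst (poly p (u c)) * idem i c)"
    using assms by (rule ncpoly_t_eqv_sum_idem)
  also have "\<dots> \<approx> (\<Sum>c\<in>{1..r}. ncconst (poly p (u c)) * diag (\<lambda>k. if k i = c then 1 else 0))"
    using assms by (intro eqv_sum eqv_mult_left idem_eqv_diag) auto
  also have "\<dots> = diag (\<lambda>k. \<Sum>c\<in>{1..r}. poly p (u c) * (if k i = c then 1 else 0))"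
    by (simp add: ncconst_mult_diag sum_diag)
  also have "\<dots> = diag (\<lambda>k. poly p (u (k i)))"
  proof (rule diag_cong)
    fix k assume "k \<in> K"
    then have "k i \<in> {1..r}" using assms by (rule Kset_range)
    have "(\<Sum>c\<in>{1..r}. poly p (u c) * (if k i = c then 1 else 0)) =
        (\<Sum>c\<in>{1..r}. if k i = c then poly p (u c) else 0)"
      by (intro sum.cong refl) simp
    then show "(\<Sum>c\<in>{1..r}. poly p (u c) * (if k i = c then 1 else 0)) = poly p (u (k i))"
      using \<open>k i \<in> {1..r}\<close> by simp
  qed
  finally show ?thesis .
qed

lemma t_eqv_diag: "i \<in> {1..n} \<Longrightarrow> t i \<approx> diag (\<lambda>k. u (k i))"
  using ncpoly_t_eqv_diag[of i "[:0, 1:]"] by (simp add: ncpoly_X)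

end

section \<open>Elements twisting the t_i by a transposition\<close>

lemma sw_sw [simp]: "sw i (sw i x) = x"
  by (simp add: sw_def)

lemma comp_sw_sw [simp]: "k \<circ> sw i \<circ> sw i = k"
  by (simp add: fun_eq_iff)

lemma sw_range: "i \<in> {1..n-1} \<Longrightarrow> x \<in> {1..n} \<Longrightarrow> sw i x \<in> {1..n}"
  by (auto simp: sw_def)

lemma comp_sw_Kset: "i \<in> {1..n-1} \<Longrightarrow> k \<in> Kset n r \<Longrightarrow> k \<circ> sw i \<in> Kset n r"
  unfolding Kset_def PiE_def Pi_def extensional_def by (auto simp: sw_def split: if_splits)

definition twist :: "nat \<Rightarrow> ((nat \<Rightarrow> nat) \<Rightarrow> 'a) \<Rightarrow> (nat \<Rightarrow> nat) \<Rightarrow> 'a" where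
  "twist i f = (\<lambda>k. f (k \<circ> sw i))"

lemma twist_twist [simp]: "twist i (twist i f) = f"
  by (simp add: twist_def o_assoc)

lemma prod_list_indicator:
  "prod_list (map (\<lambda>j. if P j then 1 else 0) xs) = (if \<forall>j\<in>set xs. P j then 1 else (0::'b::semiring_1))"
  by (induct xs) auto

context split_family
begin

definition twists :: "nat \<Rightarrow> ('g, 'a) nc \<Rightarrow> bool" where
  "twists i X \<longleftrightarrow> (\<forall>j\<in>{1..n}. X * t j \<approx> t (sw i j) * X)"

lemma prod_idem_sw_eqv_bk:
  assumes i: "i \<in> {1..n-1}" and k: "k \<in> K"
  shows "prod_list (map (\<lambda>j. idem (sw i j) (k j)) [1..<Suc n]) \<approx> b (k \<circ> sw i)"
proof -
  have "prod_list (map (\<lambda>j. idem (sw i j) (k j)) [1..<Suc n])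
     \<approx> prod_list (map (\<lambda>j. diag (\<lambda>l. if l (sw i j) = k j then 1 else 0)) [1..<Suc n])"
    by (rule eqv_prod_list, rule idem_eqv_diag)
       (use i k Kset_range sw_range in \<open>auto simp del: upt_Suc\<close>)
  also have "\<dots> \<approx> diag (\<lambda>l. prod_list (map (\<lambda>j. if l (sw i j) = k j then 1 else 0) [1..<Suc n]))"
    by (rule diag_prod_list)
  also have "\<dots> = diag (\<lambda>l. if l = k \<circ> sw i then 1 else 0)"
  proof (rule diag_cong)
    fix l assume l: "l \<in> K"
    have "(\<forall>j\<in>set [1..<Suc n]. l (sw i j) = k j) \<longleftrightarrow> l = k \<circ> sw i"
    proof
      assume h: "\<forall>j\<in>set [1..<Suc n]. l (sw i j) = k j"
      show "l = k \<circ> sw i"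
      proof (rule Kset_eqI[OF l comp_sw_Kset[OF i k]])
        fix j assume j: "j \<in> {1..n}"
        then have "sw i j \<in> set [1..<Suc n]" using sw_range[OF i j] by auto
        then show "l j = (k \<circ> sw i) j" using h by fastforce
      qed
    qed auto
    then show "prod_list (map (\<lambda>j. if l (sw i j) = k j then 1 else 0) [1..<Suc n]) =
        (if l = k \<circ> sw i then 1 else (0::'a))"
      by (simp only: prod_list_indicator)
  qed
  also have "\<dots> = b (k \<circ> sw i)"
    using comp_sw_Kset[OF i k] by (rule diag_indicator)
  finally show ?thesis .
qed

lemma twists_mult_bk:
  assumes i: "i \<in> {1..n-1}" and X: "twists i X" and k: "k \<in> K"
  shows "X * b k \<approx> b (k \<circ> sw i) * X"
proof -
  have "X * idem j c \<approx> idem (sw i j) c * X" if "j \<in> {1..n}" for j c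
    using X that unfolding idem_def twists_def by (intro intertwines_ncpoly) simp
  then have "X * b k \<approx> prod_list (map (\<lambda>j. idem (sw i j) (k j)) [1..<Suc n]) * X"
    unfolding bk_eq_prod_idem by (intro intertwines_prod_list) (auto simp del: upt_Suc)
  also have "\<dots> \<approx> b (k \<circ> sw i) * X"
    using i k by (intro eqv_mult_right prod_idem_sw_eqv_bk)
  finally show ?thesis .
qed

lemma twists_mult_diag:
  assumes i: "i \<in> {1..n-1}" and X: "twists i X"
  shows "X * diag f \<approx> diag (twist i f) * X"
proof -
  have "X * diag f = (\<Sum>k\<in>K. ncconst (f k) * (X * b k))"
    unfolding diag_def by (simp add: sum_distrib_left ncconst_left_commute)
  also have "\<dots> \<approx> (\<Sum>k\<in>K. ncconst (f k) * (b (k \<circ> sw i) * X))"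
    using assms by (intro eqv_sum eqv_mult_left twists_mult_bk)
  also have "\<dots> = (\<Sum>k\<in>K. ncconst (f k) * b (k \<circ> sw i)) * X"
    by (simp add: sum_distrib_right mult.assoc)
  also have "(\<Sum>k\<in>K. ncconst (f k) * b (k \<circ> sw i)) = diag (twist i f)"
    unfolding diag_def twist_def
    by (rule sum.reindex_bij_witness[of _ "\<lambda>k. k \<circ> sw i" "\<lambda>k. k \<circ> sw i"])
       (use i comp_sw_Kset in auto)
  finally show ?thesis .
qed

lemma diag_mult_twists:
  assumes "i \<in> {1..n-1}" "twists i X"
  shows "diag f * X \<approx> X * diag (twist i f)"
  using twists_mult_diag[OF assms, of "twist i f"] by (simp add: eqv_sym)

lemma twists_mult_diag_mult:
  assumes a: "a \<in> {1..n-1}" and X: "twists a X" and X_quad: "X * X \<approx> 1 + X * diag E"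
  shows "X * (diag R * X) \<approx> diag (twist a R) + X * diag (\<lambda>k. E k * twist a R k)"
proof -
  have "X * (diag R * X) \<approx> X * (X * diag (twist a R))"
    by (intro eqv_mult_left diag_mult_twists a X)
  also have "\<dots> = (X * X) * diag (twist a R)" by (simp add: mult.assoc)
  also have "\<dots> \<approx> (1 + X * diag E) * diag (twist a R)" by (intro eqv_mult_right X_quad)
  also have "\<dots> = diag (twist a R) + X * (diag E * diag (twist a R))" by (simp add: algebra_simps)
  also have "\<dots> \<approx> diag (twist a R) + X * diag (\<lambda>k. E k * twist a R k)"
    by (intro eqv_add eqv_refl eqv_mult_left diag_mult)
  finally show ?thesis .
qed

text \<open>The right-hand side is the expansion with all diagonal factors moved to the right.\<close>

lemma triple_product_eqv:
  assumes a: "a \<in> {1..n-1}" and X: "twists a X" and c: "c \<in> {1..n-1}" and Y: "twists c Y"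
    and X_quad: "X * X \<approx> 1 + X * diag E"
  shows "(X - diag P) * (Y - diag R) * (X - diag P) \<approx>
     X * Y * X - X * Y * diag P - Y * X * diag (twist a (twist c P))
     + X * diag (\<lambda>k. - E k * twist a R k + R k * P k + twist a (\<lambda>k. P k * R k) k)
     + Y * diag (\<lambda>k. twist c P k * P k) - diag (\<lambda>k. twist a R k + P k * R k * P k)"
proof -
  note Xd = diag_mult_twists[OF a X] and Yd = diag_mult_twists[OF c Y]
  note t3 = twists_mult_diag_mult[OF a X X_quad, of R]
  have "(diag P * Y) * X \<approx> (Y * diag (twist c P)) * X" by (intro eqv_mult_right Yd)
  also have "\<dots> = Y * (diag (twist c P) * X)" by (simp add: mult.assoc)
  also have "\<dots> \<approx> Y * (X * diag (twist a (twist c P)))" by (intro eqv_mult_left Xd)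
  finally have t5: "(diag P * Y) * X \<approx> Y * X * diag (twist a (twist c P))"
    by (simp add: mult.assoc)
  have "(diag P * Y) * diag P \<approx> (Y * diag (twist c P)) * diag P" by (intro eqv_mult_right Yd)
  also have "\<dots> = Y * (diag (twist c P) * diag P)" by (simp add: mult.assoc)
  also have "\<dots> \<approx> Y * diag (\<lambda>k. twist c P k * P k)" by (intro eqv_mult_left diag_mult)
  finally have t6: "(diag P * Y) * diag P \<approx> Y * diag (\<lambda>k. twist c P k * P k)" .
  have t7: "(diag P * diag R) * X \<approx> X * diag (twist a (\<lambda>k. P k * R k))"
    using eqv_mult_right[OF diag_mult, of P R X] Xd by (rule eqv_trans)
  have t8: "(diag P * diag R) * diag P \<approx> diag (\<lambda>k. P k * R k * P k)"
    using eqv_mult_right[OF diag_mult, of P R "diag P"] diag_mult by (rule eqv_trans)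
  have "(X - diag P) * (Y - diag R) * (X - diag P) =
      X * Y * X - X * Y * diag P - X * (diag R * X) + X * (diag R * diag P) - (diag P * Y) * X
      + (diag P * Y) * diag P + (diag P * diag R) * X - (diag P * diag R) * diag P"
    by (simp add: algebra_simps)
  also have "\<dots> \<approx>
      X * Y * X - X * Y * diag P - (diag (twist a R) + X * diag (\<lambda>k. E k * twist a R k))
      + X * diag (\<lambda>k. R k * P k) - Y * X * diag (twist a (twist c P))
      + Y * diag (\<lambda>k. twist c P k * P k) + X * diag (twist a (\<lambda>k. P k * R k))
      - diag (\<lambda>k. P k * R k * P k)"
    by (intro eqv_add eqv_diff eqv_refl t3 eqv_mult_left[OF diag_mult] t5 t6 t7 t8)
  also have "\<dots> = X * Y * X - X * Y * diag P - Y * X * diag (twist a (twist c P))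
     + X * diag (\<lambda>k. - E k * twist a R k + R k * P k + twist a (\<lambda>k. P k * R k) k)
     + Y * diag (\<lambda>k. twist c P k * P k) - diag (\<lambda>k. twist a R k + P k * R k * P k)"
    by (simp only: diag_add diag_uminus mult_minus_left) (simp add: algebra_simps)
  finally show ?thesis .
qed

end

section \<open>The Hecke-type relations in the diagonal subalgebra\<close>

definition Hcorr_gen ::
  "(nat \<Rightarrow> 'a::comm_ring_1) \<Rightarrow> nat \<Rightarrow> 'a \<Rightarrow> (nat \<Rightarrow> ('g, 'a) nc) \<Rightarrow> nat \<Rightarrow> ('g, 'a) nc" where
  "Hcorr_gen u r q t j = ncmul (ncconst (ring_inv (Delta u r) ^ 2))
     (\<Sum>(c1, c2)\<in>{(c1, c2). 1 \<le> c1 \<and> c1 < c2 \<and> c2 \<le> r}.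
        ncmul (ncconst ((u c2 - u c1) * (q - ring_inv q)))
          (ncmul (ncpoly (Fpoly u r c1) (t (j - 1))) (ncpoly (Fpoly u r c2) (t j))))"

lemma Hcorr_eq_Hcorr_gen: "Hcorr u r q j = Hcorr_gen u r q (\<lambda>i. ncgen (Ht i)) j"
  by (simp add: Hcorr_def Hcorr_gen_def)

lemma finite_ordered_pairs: "finite {(c1, c2). 1 \<le> c1 \<and> c1 < c2 \<and> c2 \<le> (r::nat)}"
  by (rule finite_subset[of _ "{1..r} \<times> {1..r}"]) auto

locale hecke_family = split_family Rel u r n t for Rel :: "('g, 'a::idom) nc set" and u r n t +
  fixes q :: 'a
  assumes q_unit: "q dvd 1"
begin

definition qdiff :: 'a where
  "qdiff = q - ring_inv q"

text \<open>Coefficient functions of B'_{i,i+1}, of e_i and of the correction term of H_{n,r}, and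
  the defect mixed_coeff i m of the relation T_i t_m = t_{s_i(m)} T_i.\<close>

definition Bcoeff :: "nat \<Rightarrow> (nat \<Rightarrow> nat) \<Rightarrow> 'a" where
  "Bcoeff i = (\<lambda>k. if k i < k (Suc i) then - qdiff else 0)"

definition ecoeff :: "nat \<Rightarrow> (nat \<Rightarrow> nat) \<Rightarrow> 'a" where
  "ecoeff i = (\<lambda>k. if k i = k (Suc i) then 1 else 0)"

definition Hcoeff :: "nat \<Rightarrow> (nat \<Rightarrow> nat) \<Rightarrow> 'a" where
  "Hcoeff i = (\<lambda>k. if k i < k (Suc i) then (u (k (Suc i)) - u (k i)) * qdiff else 0)"

definition mixed_coeff :: "nat \<Rightarrow> nat \<Rightarrow> (nat \<Rightarrow> nat) \<Rightarrow> 'a" where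
  "mixed_coeff i m =
     (if m = Suc i then Hcoeff i else if m = i then (\<lambda>k. - Hcoeff i k) else (\<lambda>k. 0))"

lemma Bprime_eq_diag: "Bprime u r n q t i (Suc i) = diag (Bcoeff i)"
  unfolding Bprime_def ncmul_eq sum_filter_bk ncconst_mult_diag qdiff_def[symmetric] Bcoeff_def
  by (intro diag_cong) simp

lemma eel_eq_diag: "eel u r n t i = diag (ecoeff i)"
  unfolding eel_def sum_filter_bk ecoeff_def ..

lemma Fpoly_t_eqv_diag:
  assumes "i \<in> {1..n}" "c \<in> {1..r}"
  shows "ncpoly (Fpoly u r c) (t i) \<approx> diag (\<lambda>k. if k i = c then Delta u r else 0)"
proof -
  have "ncpoly (Fpoly u r c) (t i) \<approx> diag (\<lambda>k. poly (Fpoly u r c) (u (k i)))"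
    using assms(1) by (rule ncpoly_t_eqv_diag)
  also have "\<dots> = diag (\<lambda>k. if k i = c then Delta u r else 0)"
  proof (rule diag_cong)
    fix k assume "k \<in> K"
    then have "k i \<in> {1..r}" using assms(1) by (rule Kset_range)
    then show "poly (Fpoly u r c) (u (k i)) = (if k i = c then Delta u r else 0)"
      using assms(2) by (auto simp: Fpoly_eq_smult_lagrange poly_lagrange)
  qed
  finally show ?thesis .
qed

lemma Hcorr_coefficient:
  assumes "a \<in> {1..r}" "c \<in> {1..r}"
  shows "ring_inv (Delta u r) ^ 2 * (\<Sum>p\<in>{(c1, c2). 1 \<le> c1 \<and> c1 < c2 \<and> c2 \<le> r}.
      (u (snd p) - u (fst p)) * qdiff *
      ((if a = fst p then Delta u r else 0) * (if c = snd p then Delta u r else 0)))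
    = (if a < c then (u c - u a) * qdiff else 0)"
proof -
  let ?\<Delta> = "Delta u r"
  have "(\<Sum>p\<in>{(c1, c2). 1 \<le> c1 \<and> c1 < c2 \<and> c2 \<le> r}.
      (u (snd p) - u (fst p)) * qdiff * ((if a = fst p then ?\<Delta> else 0) * (if c = snd p then ?\<Delta> else 0)))
    = (\<Sum>p\<in>{(c1, c2). 1 \<le> c1 \<and> c1 < c2 \<and> c2 \<le> r}.
      if p = (a, c) then (u c - u a) * qdiff * (?\<Delta> * ?\<Delta>) else 0)"
    by (intro sum.cong refl) auto
  also have "\<dots> = (if a < c then (u c - u a) * qdiff * (?\<Delta> * ?\<Delta>) else 0)"
    using assms finite_ordered_pairs[of r] by (simp add: sum.delta')
  finally show ?thesis by (simp add: ring_inv_sq_cancel[OF Delta_unit])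
qed

lemma Hcorr_gen_eqv_diag:
  assumes j: "j \<in> {2..n}"
  shows "Hcorr_gen u r q t j \<approx> diag (Hcoeff (j - 1))"
proof -
  let ?P = "{(c1, c2). 1 \<le> c1 \<and> c1 < c2 \<and> c2 \<le> r}"
  let ?\<delta> = "\<lambda>i c k. if k i = c then Delta u r else 0"
  have j1: "j - 1 \<in> {1..n}" "j \<in> {1..n}" using j by auto
  have "Hcorr_gen u r q t j = ncconst (ring_inv (Delta u r) ^ 2) *
     (\<Sum>p\<in>?P. ncconst ((u (snd p) - u (fst p)) * qdiff) *
        (ncpoly (Fpoly u r (fst p)) (t (j - 1)) * ncpoly (Fpoly u r (snd p)) (t j)))"
    unfolding Hcorr_gen_def qdiff_def by (simp add: case_prod_unfold)
  also have "\<dots> \<approx> ncconst (ring_inv (Delta u r) ^ 2) *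
     (\<Sum>p\<in>?P. ncconst ((u (snd p) - u (fst p)) * qdiff) *
        diag (\<lambda>k. ?\<delta> (j - 1) (fst p) k * ?\<delta> j (snd p) k))"
    by (rule eqv_mult_left, rule eqv_sum, rule eqv_mult_left, rule eqv_diag_mult;
        rule Fpoly_t_eqv_diag) (use j1 in auto)
  also have "\<dots> = diag (\<lambda>k. ring_inv (Delta u r) ^ 2 *
      (\<Sum>p\<in>?P. (u (snd p) - u (fst p)) * qdiff * (?\<delta> (j - 1) (fst p) k * ?\<delta> j (snd p) k)))"
    by (simp only: ncconst_mult_diag sum_diag)
  also have "\<dots> = diag (Hcoeff (j - 1))"
  proof (rule diag_cong)
    fix k assume "k \<in> K"
    then have kv: "k (j - 1) \<in> {1..r}" "k j \<in> {1..r}" using Kset_range j1 by auto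
    show "ring_inv (Delta u r) ^ 2 *
        (\<Sum>p\<in>?P. (u (snd p) - u (fst p)) * qdiff * (?\<delta> (j - 1) (fst p) k * ?\<delta> j (snd p) k))
      = Hcoeff (j - 1) k"
      unfolding Hcorr_coefficient[OF kv] using j by (simp add: Hcoeff_def)
  qed
  finally show ?thesis .
qed

lemma hecke_quadratic_expand:
  fixes T :: "('h, 'a) nc"
  shows "(T - ncconst q) * (T + ncconst (ring_inv q)) = T * T - ncconst qdiff * T - 1"
proof -
  have c: "T * ncconst (ring_inv q) = ncconst (ring_inv q) * T"
    by (simp add: ncconst_commute)
  have d: "ncconst q * ncconst (ring_inv q) = (1::('h, 'a) nc)"
    by (simp only: ncconst_mult[symmetric] ring_inv_right[OF q_unit] ncconst_1)
  show ?thesis by (simp add: algebra_simps ncconst_diff c d qdiff_def)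
qed

text \<open>Shifting an element X by the diagonal element B'_{i,i+1} transforms the relations of
  the new presentation into those of H_{n,r}.\<close>

lemma mixed_shift:
  assumes i: "i \<in> {1..n-1}" and m: "m \<in> {1..n}"
  shows "(X - diag (Bcoeff i)) * t m - t (sw i m) * (X - diag (Bcoeff i)) - diag (mixed_coeff i m)
    \<approx> X * t m - t (sw i m) * X"
proof -
  have sm: "sw i m \<in> {1..n}" using sw_range[OF i m] .
  have a1: "diag (Bcoeff i) * t m \<approx> diag (\<lambda>k. Bcoeff i k * u (k m))"
    by (intro eqv_diag_mult eqv_refl t_eqv_diag m)
  have a2: "t (sw i m) * diag (Bcoeff i) \<approx> diag (\<lambda>k. u (k (sw i m)) * Bcoeff i k)"
    by (intro eqv_diag_mult eqv_refl t_eqv_diag sm)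
  have z: "diag (\<lambda>k. Bcoeff i k * u (k m)) - diag (\<lambda>k. u (k (sw i m)) * Bcoeff i k)
      + diag (mixed_coeff i m) = 0"
  proof -
    have "diag (\<lambda>k. Bcoeff i k * u (k m) - u (k (sw i m)) * Bcoeff i k + mixed_coeff i m k)
        = diag (\<lambda>k. 0)"
      by (intro diag_cong) (auto simp: Bcoeff_def mixed_coeff_def Hcoeff_def sw_def algebra_simps)
    then show ?thesis by (simp only: diag_add diag_diff diag_0)
  qed
  have "(X - diag (Bcoeff i)) * t m - t (sw i m) * (X - diag (Bcoeff i)) - diag (mixed_coeff i m)
     = X * t m - t (sw i m) * X
       - (diag (Bcoeff i) * t m - t (sw i m) * diag (Bcoeff i) + diag (mixed_coeff i m))"
    by (simp add: algebra_simps)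
  also have "\<dots> \<approx> X * t m - t (sw i m) * X
       - (diag (\<lambda>k. Bcoeff i k * u (k m)) - diag (\<lambda>k. u (k (sw i m)) * Bcoeff i k)
          + diag (mixed_coeff i m))"
    by (intro eqv_diff eqv_add a1 a2 eqv_refl)
  finally show ?thesis by (simp only: z diff_zero)
qed

lemma mixed_iff_twists:
  assumes i: "i \<in> {1..n-1}"
  shows "(\<forall>m\<in>{1..n}. T * t m - t (sw i m) * T \<approx> diag (mixed_coeff i m))
    \<longleftrightarrow> twists i (T + diag (Bcoeff i))"
proof -
  have "T * t m - t (sw i m) * T \<approx> diag (mixed_coeff i m) \<longleftrightarrow>
      (T + diag (Bcoeff i)) * t m \<approx> t (sw i m) * (T + diag (Bcoeff i))"
    if m: "m \<in> {1..n}" for m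
    using mixed_shift[OF i m, of "T + diag (Bcoeff i)"] eqv_sym eqv_trans
    unfolding add_diff_cancel_right' eqv_iff_diff_eqv_0[of "T * t m - _"]
      eqv_iff_diff_eqv_0[of "(T + _) * t m"]
    by meson
  then show ?thesis unfolding twists_def by blast
qed

lemma quadratic_shift:
  assumes i: "i \<in> {1..n-1}" and X: "twists i X"
  shows "(X - diag (Bcoeff i)) * (X - diag (Bcoeff i)) - ncconst qdiff * (X - diag (Bcoeff i)) - 1
     \<approx> X * X - 1 - ncconst qdiff * (diag (ecoeff i) * X)"
proof -
  let ?\<gamma> = "Bcoeff i"
  have Bsq: "diag (\<lambda>k. ?\<gamma> k * ?\<gamma> k) + diag (\<lambda>k. qdiff * ?\<gamma> k) = 0"
  proof -
    have "diag (\<lambda>k. ?\<gamma> k * ?\<gamma> k + qdiff * ?\<gamma> k) = diag (\<lambda>k. 0)"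
      by (rule arg_cong[where f = diag]) (simp add: Bcoeff_def fun_eq_iff)
    then show ?thesis by (simp only: diag_add diag_0)
  qed
  have Blin: "diag (twist i ?\<gamma>) + diag ?\<gamma> + ncconst qdiff = ncconst qdiff * diag (ecoeff i)"
  proof -
    have "diag (\<lambda>k. twist i ?\<gamma> k + ?\<gamma> k + qdiff) = diag (\<lambda>k. qdiff * ecoeff i k)"
      by (intro diag_cong) (auto simp: twist_def Bcoeff_def ecoeff_def sw_def)
    then show ?thesis by (simp only: diag_add ncconst_mult_diag flip: ncconst_eq_diag)
  qed
  have "(X - diag ?\<gamma>) * (X - diag ?\<gamma>) - ncconst qdiff * (X - diag ?\<gamma>) - 1
     = X * X - X * diag ?\<gamma> - diag ?\<gamma> * X + diag ?\<gamma> * diag ?\<gamma> - ncconst qdiff * X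
       + ncconst qdiff * diag ?\<gamma> - 1"
    by (simp add: algebra_simps)
  also have "\<dots> \<approx> X * X - diag (twist i ?\<gamma>) * X - diag ?\<gamma> * X + diag (\<lambda>k. ?\<gamma> k * ?\<gamma> k)
       - ncconst qdiff * X + diag (\<lambda>k. qdiff * ?\<gamma> k) - 1"
    by (intro eqv_add eqv_diff eqv_refl twists_mult_diag[OF i X] diag_mult)
       (simp add: ncconst_mult_diag)
  also have "\<dots> = X * X - (diag (twist i ?\<gamma>) + diag ?\<gamma> + ncconst qdiff) * X
       + (diag (\<lambda>k. ?\<gamma> k * ?\<gamma> k) + diag (\<lambda>k. qdiff * ?\<gamma> k)) - 1"
    by (simp add: algebra_simps)
  also have "\<dots> = X * X - 1 - ncconst qdiff * (diag (ecoeff i) * X)"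
    by (simp only: Blin Bsq) (simp add: algebra_simps)
  finally show ?thesis .
qed

lemma far_commutation_shift:
  assumes i: "i \<in> {1..n-1}" and j: "j \<in> {1..n-1}" and ij: "i + 2 \<le> j \<or> j + 2 \<le> i"
    and X: "twists i X" and Y: "twists j Y"
  shows "(X - diag (Bcoeff i)) * (Y - diag (Bcoeff j)) - (Y - diag (Bcoeff j)) * (X - diag (Bcoeff i))
    \<approx> X * Y - Y * X"
proof -
  have "twist i (Bcoeff j) = Bcoeff j" "twist j (Bcoeff i) = Bcoeff i"
    using ij by (auto simp: twist_def Bcoeff_def sw_def fun_eq_iff)
  then have a: "X * diag (Bcoeff j) \<approx> diag (Bcoeff j) * X"
    and b: "Y * diag (Bcoeff i) \<approx> diag (Bcoeff i) * Y"
    using twists_mult_diag[OF i X, of "Bcoeff j"] twists_mult_diag[OF j Y, of "Bcoeff i"] by simp_all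
  have "(X - diag (Bcoeff i)) * (Y - diag (Bcoeff j)) - (Y - diag (Bcoeff j)) * (X - diag (Bcoeff i))
     = X * Y - Y * X - X * diag (Bcoeff j) + diag (Bcoeff j) * X + Y * diag (Bcoeff i)
       - diag (Bcoeff i) * Y + (diag (Bcoeff i) * diag (Bcoeff j) - diag (Bcoeff j) * diag (Bcoeff i))"
    by (simp add: algebra_simps)
  also have "\<dots> \<approx> X * Y - Y * X - diag (Bcoeff j) * X + diag (Bcoeff j) * X + diag (Bcoeff i) * Y
       - diag (Bcoeff i) * Y + (diag (Bcoeff j) * diag (Bcoeff i) - diag (Bcoeff j) * diag (Bcoeff i))"
    by (intro eqv_add eqv_diff eqv_refl a b diag_commute)
  finally show ?thesis by simp
qed

lemma quadratic_normal_form: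
  assumes i: "i \<in> {1..n-1}" and X: "twists i X"
    and X_quad: "X * X - 1 - ncconst qdiff * (diag (ecoeff i) * X) \<approx> 0"
  shows "X * X \<approx> 1 + X * diag (\<lambda>k. qdiff * ecoeff i k)"
proof -
  have "twist i (ecoeff i) = ecoeff i"
    by (auto simp: twist_def ecoeff_def sw_def fun_eq_iff)
  then have "diag (ecoeff i) * X \<approx> X * diag (ecoeff i)"
    using diag_mult_twists[OF i X, of "ecoeff i"] by simp
  have "X * X = (X * X - 1 - ncconst qdiff * (diag (ecoeff i) * X))
      + (1 + ncconst qdiff * (diag (ecoeff i) * X))"
    by simp
  also have "\<dots> \<approx> 0 + (1 + ncconst qdiff * (X * diag (ecoeff i)))"
    by (intro eqv_add X_quad eqv_refl eqv_mult_left) fact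
  also have "\<dots> = 1 + X * diag (\<lambda>k. qdiff * ecoeff i k)"
    by (simp only: add_0_left ncconst_left_commute flip: ncconst_mult_diag)
  finally show ?thesis .
qed

lemma braid_shift:
  assumes a: "a \<in> {1..n-2}" and X: "twists a X" and Y: "twists (Suc a) Y"
    and X_quad: "X * X - 1 - ncconst qdiff * (diag (ecoeff a) * X) \<approx> 0"
    and Y_quad: "Y * Y - 1 - ncconst qdiff * (diag (ecoeff (Suc a)) * Y) \<approx> 0"
  shows "(X - diag (Bcoeff a)) * (Y - diag (Bcoeff (Suc a))) * (X - diag (Bcoeff a))
      - (Y - diag (Bcoeff (Suc a))) * (X - diag (Bcoeff a)) * (Y - diag (Bcoeff (Suc a)))
    \<approx> X * Y * X - Y * X * Y"
proof -
  let ?b = "Suc a"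
  have ia: "a \<in> {1..n-1}" and ib: "?b \<in> {1..n-1}" using a by auto
  note L = triple_product_eqv[OF ia X ib Y quadratic_normal_form[OF ia X X_quad],
      of "Bcoeff a" "Bcoeff ?b"]
  note R = triple_product_eqv[OF ib Y ia X quadratic_normal_form[OF ib Y Y_quad],
      of "Bcoeff ?b" "Bcoeff a"]
  have e1: "twist ?b (twist a (Bcoeff ?b)) = Bcoeff a"
    and e2: "twist a (twist ?b (Bcoeff a)) = Bcoeff ?b"
    by (auto simp: twist_def Bcoeff_def sw_def fun_eq_iff)
  have e3: "(\<lambda>k. - (qdiff * ecoeff a k) * twist a (Bcoeff ?b) k + Bcoeff ?b k * Bcoeff a k
        + twist a (\<lambda>k. Bcoeff a k * Bcoeff ?b k) k) = (\<lambda>k. twist a (Bcoeff ?b) k * Bcoeff ?b k)"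
    and e4: "(\<lambda>k. - (qdiff * ecoeff ?b k) * twist ?b (Bcoeff a) k + Bcoeff a k * Bcoeff ?b k
        + twist ?b (\<lambda>k. Bcoeff ?b k * Bcoeff a k) k) = (\<lambda>k. twist ?b (Bcoeff a) k * Bcoeff a k)"
    and e5: "(\<lambda>k. twist a (Bcoeff ?b) k + Bcoeff a k * Bcoeff ?b k * Bcoeff a k)
        = (\<lambda>k. twist ?b (Bcoeff a) k + Bcoeff ?b k * Bcoeff a k * Bcoeff ?b k)"
    by (auto simp: twist_def Bcoeff_def ecoeff_def sw_def fun_eq_iff)
  show ?thesis
    using eqv_diff[OF L R]
    by (simp only: e1 e2 e3 e4 e5) (erule eqv_trans_eq2, simp add: algebra_simps)
qed

end

lemma nc_subst_bk: "nc_subst f (bk u r n t k) = bk u r n (\<lambda>i. nc_subst f (t i)) k"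
  unfolding bk_def by (simp add: nc_subst_prod_list nc_subst_mult nc_subst_diff o_def del: upt_Suc)

lemma nc_subst_Bprime: "nc_subst f (Bprime u r n q t i j) = Bprime u r n q (\<lambda>i. nc_subst f (t i)) i j"
  unfolding Bprime_def by (simp add: nc_subst_mult nc_subst_sum nc_subst_bk)

lemma nc_subst_eel: "nc_subst f (eel u r n t i) = eel u r n (\<lambda>i. nc_subst f (t i)) i"
  unfolding eel_def by (simp add: nc_subst_sum nc_subst_bk)

lemma nc_subst_Hcorr_gen: "nc_subst f (Hcorr_gen u r q t j) = Hcorr_gen u r q (\<lambda>i. nc_subst f (t i)) j"
  unfolding Hcorr_gen_def by (simp add: nc_subst_mult nc_subst_sum nc_subst_ncpoly case_prod_unfold)

lemma fa_on_bk:
  "(\<And>i. i \<in> {1..n} \<Longrightarrow> t i \<in> fa_on S) \<Longrightarrow> bk u r n t k \<in> (fa_on S :: ('g, 'a::comm_ring_1) nc set)"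
  unfolding bk_def ncmul_eq ncprod_eq
  by (intro fa_on_prod_list)
     (auto intro!: fa_on_prod_list fa_on_mult fa_on_ncconst fa_on_diff simp del: upt_Suc)

lemma fa_on_Bprime:
  "(\<And>i. i \<in> {1..n} \<Longrightarrow> t i \<in> fa_on S) \<Longrightarrow> Bprime u r n q t i j \<in> (fa_on S :: ('g, 'a::comm_ring_1) nc set)"
  unfolding Bprime_def ncmul_eq by (intro fa_on_mult fa_on_ncconst fa_on_sum fa_on_bk) auto

lemma fa_on_eel:
  "(\<And>i. i \<in> {1..n} \<Longrightarrow> t i \<in> fa_on S) \<Longrightarrow> eel u r n t i \<in> (fa_on S :: ('g, 'a::comm_ring_1) nc set)"
  unfolding eel_def by (intro fa_on_sum fa_on_bk) auto

lemma fa_on_Hcorr_gen: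
  "t (j - 1) \<in> fa_on S \<Longrightarrow> t j \<in> fa_on S \<Longrightarrow> Hcorr_gen u r q t j \<in> (fa_on S :: ('g, 'a::comm_ring_1) nc set)"
  unfolding Hcorr_gen_def ncmul_eq case_prod_unfold
  by (intro fa_on_mult fa_on_ncconst fa_on_sum fa_on_ncpoly)

lemma fa_on_Ht: "i \<in> {1..n} \<Longrightarrow> ncgen (Ht i) \<in> fa_on (Hgens n)"
  by (intro fa_on_ncgen) (simp add: Hgens_def)

lemma fa_on_HT: "i \<in> {1..n-1} \<Longrightarrow> ncgen (HT i) \<in> fa_on (Hgens n)"
  by (intro fa_on_ncgen) (simp add: Hgens_def)

lemma fa_on_Pt: "i \<in> {1..n} \<Longrightarrow> ncgen (Pt i) \<in> fa_on (Pgens n)"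
  by (intro fa_on_ncgen) (simp add: Pgens_def)

lemma fa_on_Pg: "i \<in> {1..n-1} \<Longrightarrow> ncgen (Pg i) \<in> fa_on (Pgens n)"
  by (intro fa_on_ncgen) (simp add: Pgens_def)

lemma Hrels_subset_fa_on: "Hrels u r n q \<subseteq> fa_on (Hgens n)"
  unfolding Hrels_def ncmul_eq ncprod_eq Hcorr_eq_Hcorr_gen
  by (auto intro!: fa_on_add fa_on_diff fa_on_mult fa_on_ncconst fa_on_prod_list fa_on_Ht fa_on_HT
      fa_on_Hcorr_gen simp del: upt_Suc)

lemma Prels_subset_fa_on: "Prels u r n q \<subseteq> fa_on (Pgens n)"
  unfolding Prels_def ncmul_eq ncprod_eq
  by (auto intro!: fa_on_diff fa_on_mult fa_on_ncconst fa_on_1 fa_on_prod_list fa_on_Pt fa_on_Pg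
      fa_on_eel sw_range simp del: upt_Suc)

definition phi_gen :: "(nat \<Rightarrow> 'a::comm_ring_1) \<Rightarrow> nat \<Rightarrow> nat \<Rightarrow> 'a \<Rightarrow> hgen \<Rightarrow> (pgen, 'a) nc" where
  "phi_gen u r n q h = (case h of
       Ht i \<Rightarrow> ncgen (Pt i)
     | HT i \<Rightarrow> ncgen (Pg i) - Bprime u r n q (\<lambda>i. ncgen (Pt i)) i (Suc i))"

lemma nc_subst_phi_psi_gen: "nc_subst (phi_gen u r n q) (psi_gen u r n q a) = ncgen a"
  by (cases a) (simp_all add: psi_gen_def phi_gen_def nc_subst_add nc_subst_Bprime)

lemma nc_subst_psi_phi_gen: "nc_subst (psi_gen u r n q) (phi_gen u r n q b) = ncgen b"
  by (cases b) (simp_all add: psi_gen_def phi_gen_def nc_subst_diff nc_subst_Bprime)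

lemma psi_gen_fa_on: "a \<in> Pgens n \<Longrightarrow> psi_gen u r n q a \<in> fa_on (Hgens n)"
  by (auto simp: Pgens_def psi_gen_def intro!: fa_on_add fa_on_HT fa_on_Ht fa_on_Bprime)

lemma phi_gen_fa_on: "b \<in> Hgens n \<Longrightarrow> phi_gen u r n q b \<in> fa_on (Pgens n)"
  by (auto simp: Hgens_def phi_gen_def intro!: fa_on_diff fa_on_Pg fa_on_Pt fa_on_Bprime)

context
  fixes u :: "nat \<Rightarrow> 'a::idom" and r n :: nat and q :: 'a
begin

lemma Hrels_quadratic:
  "i \<in> {1..n-1} \<Longrightarrow> (ncgen (HT i) - ncconst q) * (ncgen (HT i) + ncconst (ring_inv q)) \<in> Hrels u r n q"
  unfolding Hrels_def ncmul_eq by blast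

lemma Hrels_annihilator:
  "i \<in> {1..n} \<Longrightarrow> prod_list (map (\<lambda>c. ncgen (Ht i) - ncconst (u c)) [1..<Suc r]) \<in> Hrels u r n q"
  unfolding Hrels_def ncprod_eq by blast

lemma Hrels_braid:
  "i \<in> {1..n-2} \<Longrightarrow> ncgen (HT i) * ncgen (HT (Suc i)) * ncgen (HT i)
     - ncgen (HT (Suc i)) * ncgen (HT i) * ncgen (HT (Suc i)) \<in> Hrels u r n q"
  unfolding Hrels_def ncprod_eq by (auto simp: mult.assoc)

lemma Hrels_far:
  "i \<in> {1..n-1} \<Longrightarrow> j \<in> {1..n-1} \<Longrightarrow> i + 2 \<le> j \<or> j + 2 \<le> i \<Longrightarrow>
     ncgen (HT i) * ncgen (HT j) - ncgen (HT j) * ncgen (HT i) \<in> Hrels u r n q"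
  unfolding Hrels_def ncmul_eq by blast

lemma Hrels_t_commute:
  "i \<in> {1..n} \<Longrightarrow> j \<in> {1..n} \<Longrightarrow> ncgen (Ht i) * ncgen (Ht j) - ncgen (Ht j) * ncgen (Ht i) \<in> Hrels u r n q"
  unfolding Hrels_def ncmul_eq by blast

lemma Hrels_T_t_commute:
  "j \<in> {1..n-1} \<Longrightarrow> k \<in> {1..n} \<Longrightarrow> k \<noteq> j \<Longrightarrow> k \<noteq> Suc j \<Longrightarrow>
     ncgen (HT j) * ncgen (Ht k) - ncgen (Ht k) * ncgen (HT j) \<in> Hrels u r n q"
  unfolding Hrels_def ncmul_eq by blast

lemma Hrels_mixed_up:
  "j \<in> {2..n} \<Longrightarrow> ncgen (HT (j - 1)) * ncgen (Ht j) - ncgen (Ht (j - 1)) * ncgen (HT (j - 1))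
     - Hcorr_gen u r q (\<lambda>i. ncgen (Ht i)) j \<in> Hrels u r n q"
  unfolding Hrels_def ncmul_eq Hcorr_eq_Hcorr_gen by blast

lemma Hrels_mixed_down:
  "j \<in> {2..n} \<Longrightarrow> ncgen (HT (j - 1)) * ncgen (Ht (j - 1)) - ncgen (Ht j) * ncgen (HT (j - 1))
     + Hcorr_gen u r q (\<lambda>i. ncgen (Ht i)) j \<in> Hrels u r n q"
  unfolding Hrels_def ncmul_eq Hcorr_eq_Hcorr_gen by blast

lemma Prels_annihilator:
  "i \<in> {1..n} \<Longrightarrow> prod_list (map (\<lambda>c. ncgen (Pt i) - ncconst (u c)) [1..<Suc r]) \<in> Prels u r n q"
  unfolding Prels_def ncprod_eq by blast

lemma Prels_t_commute:
  "i \<in> {1..n} \<Longrightarrow> j \<in> {1..n} \<Longrightarrow> ncgen (Pt i) * ncgen (Pt j) - ncgen (Pt j) * ncgen (Pt i) \<in> Prels u r n q"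
  unfolding Prels_def ncmul_eq by blast

lemma Prels_g_t:
  "j \<in> {1..n-1} \<Longrightarrow> i \<in> {1..n} \<Longrightarrow>
     ncgen (Pg j) * ncgen (Pt i) - ncgen (Pt (sw j i)) * ncgen (Pg j) \<in> Prels u r n q"
  unfolding Prels_def ncmul_eq by blast

lemma Prels_far:
  "i \<in> {1..n-1} \<Longrightarrow> j \<in> {1..n-1} \<Longrightarrow> i + 2 \<le> j \<or> j + 2 \<le> i \<Longrightarrow>
     ncgen (Pg i) * ncgen (Pg j) - ncgen (Pg j) * ncgen (Pg i) \<in> Prels u r n q"
  unfolding Prels_def ncmul_eq by blast

lemma Prels_braid:
  "i \<in> {1..n-2} \<Longrightarrow> ncgen (Pg i) * ncgen (Pg (Suc i)) * ncgen (Pg i)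
     - ncgen (Pg (Suc i)) * ncgen (Pg i) * ncgen (Pg (Suc i)) \<in> Prels u r n q"
  unfolding Prels_def ncprod_eq by (auto simp: mult.assoc)

lemma Prels_quadratic:
  "i \<in> {1..n-1} \<Longrightarrow> ncgen (Pg i) * ncgen (Pg i) - 1
     - ncconst (q - ring_inv q) * (eel u r n (\<lambda>i. ncgen (Pt i)) i * ncgen (Pg i)) \<in> Prels u r n q"
  unfolding Prels_def ncmul_eq ncconst_1 by blast

end

section \<open>The substitution g_i \<mapsto> T_i + B'_{i,i+1} respects the relations\<close>

locale AK_side = hecke_family "Hrels u r n q" u r n "\<lambda>i. ncgen (Ht i)" q
  for u :: "nat \<Rightarrow> 'a::idom" and r n :: nat and q :: 'a

lemma AK_sideI:
  assumes "r \<ge> 1" "Delta u r dvd 1" "q dvd 1"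
  shows "AK_side u r n q"
proof unfold_locales
  fix i j assume "i \<in> {1..n}" "j \<in> {1..n}"
  then show "nc_congruence.eqv (Hrels u r n q) (ncgen (Ht i) * ncgen (Ht j)) (ncgen (Ht j) * ncgen (Ht i))"
    unfolding nc_congruence.eqv_def by (intro nc_ideal_rel Hrels_t_commute)
next
  fix i assume "i \<in> {1..n}"
  then show "prod_list (map (\<lambda>c. ncgen (Ht i) - ncconst (u c)) [1..<Suc r]) \<in> full_ideal (Hrels u r n q)"
    by (intro nc_ideal_rel Hrels_annihilator)
qed (use assms in auto)

context AK_side
begin

notation eqv (infix \<open>\<approx>\<close> 50)

abbreviation psi_g :: "nat \<Rightarrow> (hgen, 'a) nc" where
  "psi_g i \<equiv> psi_gen u r n q (Pg i)"

lemma psi_gen_Pt: "psi_gen u r n q (Pt i) = ncgen (Ht i)"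
  by (simp add: psi_gen_def)

lemma psi_gen_Pg: "psi_g i = ncgen (HT i) + diag (Bcoeff i)"
  by (simp add: psi_gen_def Bprime_eq_diag)

lemma T_mixed:
  assumes i: "i \<in> {1..n-1}" and m: "m \<in> {1..n}"
  shows "ncgen (HT i) * ncgen (Ht m) - ncgen (Ht (sw i m)) * ncgen (HT i) \<approx> diag (mixed_coeff i m)"
proof -
  let ?T = "ncgen (HT i)" and ?H = "Hcorr_gen u r q (\<lambda>i. ncgen (Ht i)) (Suc i)"
  have j: "Suc i \<in> {2..n}" using i by auto
  have H: "?H \<approx> diag (Hcoeff i)" using Hcorr_gen_eqv_diag[OF j] by simp
  consider "m = Suc i" | "m = i" | "m \<noteq> i" "m \<noteq> Suc i" by blast
  then show ?thesis
  proof cases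
    case 1
    have "?T * ncgen (Ht (Suc i)) - ncgen (Ht i) * ?T \<approx> ?H"
      using rel_eqv_0[OF Hrels_mixed_up[OF j]] by (simp add: eqv_iff_diff_eqv_0[of _ ?H])
    also note H
    finally show ?thesis using 1 by (simp add: sw_def mixed_coeff_def)
  next
    case 2
    have "?T * ncgen (Ht i) - ncgen (Ht (Suc i)) * ?T \<approx> - ?H"
      using rel_eqv_0[OF Hrels_mixed_down[OF j]] by (simp add: eqv_iff_diff_eqv_0[of _ "- ?H"])
    also have "- ?H \<approx> - diag (Hcoeff i)" using H by (rule eqv_uminus)
    finally show ?thesis using 2 by (simp add: sw_def mixed_coeff_def diag_uminus)
  next
    case 3
    then show ?thesis
      using rel_eqv_0[OF Hrels_T_t_commute[OF i m]]
      by (simp add: sw_def mixed_coeff_def diag_0)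
  qed
qed

lemma twists_psi_g: "i \<in> {1..n-1} \<Longrightarrow> twists i (psi_g i)"
  unfolding psi_gen_Pg by (simp add: T_mixed flip: mixed_iff_twists)

lemma psi_g_quadratic:
  assumes i: "i \<in> {1..n-1}"
  shows "psi_g i * psi_g i - 1 - ncconst qdiff * (diag (ecoeff i) * psi_g i) \<approx> 0"
proof -
  have "psi_g i * psi_g i - 1 - ncconst qdiff * (diag (ecoeff i) * psi_g i) \<approx>
      (psi_g i - diag (Bcoeff i)) * (psi_g i - diag (Bcoeff i))
      - ncconst qdiff * (psi_g i - diag (Bcoeff i)) - 1"
    by (rule eqv_sym, rule quadratic_shift[OF i twists_psi_g[OF i]])
  also have "\<dots> = (ncgen (HT i) - ncconst q) * (ncgen (HT i) + ncconst (ring_inv q))"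
    by (simp add: psi_gen_Pg hecke_quadratic_expand)
  also have "\<dots> \<approx> 0"
    using i by (intro rel_eqv_0 Hrels_quadratic)
  finally show ?thesis .
qed

lemma psi_g_far_commute:
  assumes i: "i \<in> {1..n-1}" and j: "j \<in> {1..n-1}" and ij: "i + 2 \<le> j \<or> j + 2 \<le> i"
  shows "psi_g i * psi_g j - psi_g j * psi_g i \<approx> 0"
proof -
  have "psi_g i * psi_g j - psi_g j * psi_g i \<approx> ncgen (HT i) * ncgen (HT j) - ncgen (HT j) * ncgen (HT i)"
    using eqv_sym[OF far_commutation_shift[OF i j ij twists_psi_g[OF i] twists_psi_g[OF j]]]
    by (simp add: psi_gen_Pg)
  also have "\<dots> \<approx> 0"
    using i j ij by (intro rel_eqv_0 Hrels_far)
  finally show ?thesis .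
qed

lemma psi_g_braid:
  assumes i: "i \<in> {1..n-2}"
  shows "psi_g i * psi_g (Suc i) * psi_g i - psi_g (Suc i) * psi_g i * psi_g (Suc i) \<approx> 0"
proof -
  have i1: "i \<in> {1..n-1}" "Suc i \<in> {1..n-1}" using i by auto
  have "psi_g i * psi_g (Suc i) * psi_g i - psi_g (Suc i) * psi_g i * psi_g (Suc i)
      \<approx> ncgen (HT i) * ncgen (HT (Suc i)) * ncgen (HT i)
        - ncgen (HT (Suc i)) * ncgen (HT i) * ncgen (HT (Suc i))"
    using eqv_sym[OF braid_shift[OF i twists_psi_g[OF i1(1)] twists_psi_g[OF i1(2)]
        psi_g_quadratic[OF i1(1)] psi_g_quadratic[OF i1(2)]]]
    by (simp add: psi_gen_Pg)
  also have "\<dots> \<approx> 0"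
    using i by (intro rel_eqv_0 Hrels_braid)
  finally show ?thesis .
qed

lemma nc_subst_psi_gen_Prels:
  assumes "\<rho> \<in> Prels u r n q"
  shows "nc_subst (psi_gen u r n q) \<rho> \<approx> 0"
  using assms unfolding Prels_def ncmul_eq ncprod_eq ncconst_1
proof (elim UnE CollectE bexE conjE)
  fix j i assume j: "j \<in> {1..n-1}" and i: "i \<in> {1..n}"
    and "\<rho> = ncgen (Pg j) * ncgen (Pt i) - ncgen (Pt (sw j i)) * ncgen (Pg j)"
  moreover have "psi_g j * ncgen (Ht i) \<approx> ncgen (Ht (sw j i)) * psi_g j"
    using twists_psi_g[OF j] i unfolding twists_def by blast
  ultimately show ?thesis
    by (simp add: nc_subst_mult nc_subst_diff psi_gen_Pt flip: eqv_iff_diff_eqv_0)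
qed (use rel_eqv_0[OF Hrels_annihilator] rel_eqv_0[OF Hrels_t_commute] psi_g_quadratic
    psi_g_far_commute psi_g_braid
    in \<open>simp_all add: nc_subst_prod_list nc_subst_mult nc_subst_diff nc_subst_eel psi_gen_Pt
      eel_eq_diag qdiff_def o_def mult.assoc del: upt_Suc\<close>)

end

section \<open>The substitution T_i \<mapsto> g_i - B'_{i,i+1} respects the relations\<close>

locale new_side = hecke_family "Prels u r n q" u r n "\<lambda>i. ncgen (Pt i)" q
  for u :: "nat \<Rightarrow> 'a::idom" and r n :: nat and q :: 'a

lemma new_sideI:
  assumes "r \<ge> 1" "Delta u r dvd 1" "q dvd 1"
  shows "new_side u r n q"
proof unfold_locales
  fix i j assume "i \<in> {1..n}" "j \<in> {1..n}"
  then show "nc_congruence.eqv (Prels u r n q) (ncgen (Pt i) * ncgen (Pt j)) (ncgen (Pt j) * ncgen (Pt i))"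
    unfolding nc_congruence.eqv_def by (intro nc_ideal_rel Prels_t_commute)
next
  fix i assume "i \<in> {1..n}"
  then show "prod_list (map (\<lambda>c. ncgen (Pt i) - ncconst (u c)) [1..<Suc r]) \<in> full_ideal (Prels u r n q)"
    by (intro nc_ideal_rel Prels_annihilator)
qed (use assms in auto)

context new_side
begin

notation eqv (infix \<open>\<approx>\<close> 50)

abbreviation phi_T :: "nat \<Rightarrow> (pgen, 'a) nc" where
  "phi_T i \<equiv> phi_gen u r n q (HT i)"

lemma phi_gen_Ht: "phi_gen u r n q (Ht i) = ncgen (Pt i)"
  by (simp add: phi_gen_def)

lemma phi_gen_HT: "phi_T i = ncgen (Pg i) - diag (Bcoeff i)"
  by (simp add: phi_gen_def Bprime_eq_diag)

lemma twists_g: "i \<in> {1..n-1} \<Longrightarrow> twists i (ncgen (Pg i))"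
  unfolding twists_def eqv_iff_diff_eqv_0[of "ncgen (Pg i) * _"]
  by (intro ballI rel_eqv_0 Prels_g_t)

lemma g_quadratic:
  "i \<in> {1..n-1} \<Longrightarrow> ncgen (Pg i) * ncgen (Pg i) - 1 - ncconst qdiff * (diag (ecoeff i) * ncgen (Pg i)) \<approx> 0"
  using rel_eqv_0[OF Prels_quadratic] by (simp add: eel_eq_diag qdiff_def)

lemma phi_T_mixed:
  "i \<in> {1..n-1} \<Longrightarrow> m \<in> {1..n} \<Longrightarrow>
    phi_T i * ncgen (Pt m) - ncgen (Pt (sw i m)) * phi_T i \<approx> diag (mixed_coeff i m)"
  using mixed_iff_twists[of i "phi_T i"] twists_g by (simp add: phi_gen_HT)

lemma phi_T_quadratic:
  assumes i: "i \<in> {1..n-1}"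
  shows "phi_T i * phi_T i - ncconst qdiff * phi_T i - 1 \<approx> 0"
proof -
  have "phi_T i * phi_T i - ncconst qdiff * phi_T i - 1
      \<approx> ncgen (Pg i) * ncgen (Pg i) - 1 - ncconst qdiff * (diag (ecoeff i) * ncgen (Pg i))"
    using quadratic_shift[OF i twists_g[OF i]] by (simp add: phi_gen_HT)
  also have "\<dots> \<approx> 0" using i by (rule g_quadratic)
  finally show ?thesis .
qed

lemma phi_T_far_commute:
  assumes i: "i \<in> {1..n-1}" and j: "j \<in> {1..n-1}" and ij: "i + 2 \<le> j \<or> j + 2 \<le> i"
  shows "phi_T i * phi_T j - phi_T j * phi_T i \<approx> 0"
  using eqv_trans[OF far_commutation_shift[OF i j ij twists_g[OF i] twists_g[OF j]]
      rel_eqv_0[OF Prels_far[OF i j ij]]]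
  by (simp add: phi_gen_HT)

lemma phi_T_braid:
  assumes i: "i \<in> {1..n-2}"
  shows "phi_T i * phi_T (Suc i) * phi_T i - phi_T (Suc i) * phi_T i * phi_T (Suc i) \<approx> 0"
proof -
  have i1: "i \<in> {1..n-1}" "Suc i \<in> {1..n-1}" using i by auto
  show ?thesis
    using eqv_trans[OF braid_shift[OF i twists_g[OF i1(1)] twists_g[OF i1(2)]
        g_quadratic[OF i1(1)] g_quadratic[OF i1(2)]] rel_eqv_0[OF Prels_braid[OF i]]]
    by (simp add: phi_gen_HT)
qed

lemma phi_Hcorr_eqv_diag:
  assumes "i \<in> {1..n-1}"
  shows "nc_subst (phi_gen u r n q) (Hcorr_gen u r q (\<lambda>i. ncgen (Ht i)) (Suc i)) \<approx> diag (Hcoeff i)"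
proof -
  have "Suc i \<in> {2..n}" using assms by auto
  then show ?thesis using Hcorr_gen_eqv_diag[of "Suc i"] by (simp add: nc_subst_Hcorr_gen phi_gen_Ht)
qed

lemma phi_T_mixed_up:
  assumes i: "i \<in> {1..n-1}"
  shows "phi_T i * ncgen (Pt (Suc i)) - ncgen (Pt i) * phi_T i
    - nc_subst (phi_gen u r n q) (Hcorr_gen u r q (\<lambda>i. ncgen (Ht i)) (Suc i)) \<approx> 0"
proof -
  have m: "Suc i \<in> {1..n}" using i by auto
  show ?thesis
    using eqv_diff[OF phi_T_mixed[OF i m] phi_Hcorr_eqv_diag[OF i]] by (simp add: sw_def mixed_coeff_def)
qed

lemma phi_T_mixed_down:
  assumes i: "i \<in> {1..n-1}"
  shows "phi_T i * ncgen (Pt i) - ncgen (Pt (Suc i)) * phi_T i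
    + nc_subst (phi_gen u r n q) (Hcorr_gen u r q (\<lambda>i. ncgen (Ht i)) (Suc i)) \<approx> 0"
proof -
  have m: "i \<in> {1..n}" using i by auto
  show ?thesis
    using eqv_add[OF phi_T_mixed[OF i m] phi_Hcorr_eqv_diag[OF i]]
    by (simp add: sw_def mixed_coeff_def diag_uminus)
qed

lemma nc_subst_phi_gen_Hrels:
  assumes "\<rho> \<in> Hrels u r n q"
  shows "nc_subst (phi_gen u r n q) \<rho> \<approx> 0"
  using assms unfolding Hrels_def ncmul_eq ncprod_eq Hcorr_eq_Hcorr_gen
proof (elim UnE CollectE bexE conjE)
  fix j assume j: "j \<in> {2..n}"
    and rho: "\<rho> = ncgen (HT (j - 1)) * ncgen (Ht j) - ncgen (Ht (j - 1)) * ncgen (HT (j - 1))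
      - Hcorr_gen u r q (\<lambda>i. ncgen (Ht i)) j"
  obtain i where ji: "j = Suc i" using j by (cases j) auto
  with j have "i \<in> {1..n-1}" by auto
  with rho ji show ?thesis
    using phi_T_mixed_up by (simp add: nc_subst_mult nc_subst_diff phi_gen_Ht)
next
  fix j assume j: "j \<in> {2..n}"
    and rho: "\<rho> = ncgen (HT (j - 1)) * ncgen (Ht (j - 1)) - ncgen (Ht j) * ncgen (HT (j - 1))
      + Hcorr_gen u r q (\<lambda>i. ncgen (Ht i)) j"
  obtain i where ji: "j = Suc i" using j by (cases j) auto
  with j have "i \<in> {1..n-1}" by auto
  with rho ji show ?thesis
    using phi_T_mixed_down by (simp add: nc_subst_mult nc_subst_diff nc_subst_add phi_gen_Ht)
next
  fix j k assume j: "j \<in> {1..n-1}" and k: "k \<in> {1..n}" "k \<noteq> j" "k \<noteq> Suc j"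
    and "\<rho> = ncgen (HT j) * ncgen (Ht k) - ncgen (Ht k) * ncgen (HT j)"
  then show ?thesis
    using phi_T_mixed[OF j k(1)]
    by (simp add: nc_subst_mult nc_subst_diff phi_gen_Ht sw_def mixed_coeff_def diag_0)
qed (use rel_eqv_0[OF Prels_annihilator] rel_eqv_0[OF Prels_t_commute] phi_T_quadratic phi_T_braid
    phi_T_far_commute
    in \<open>simp_all add: nc_subst_prod_list nc_subst_mult nc_subst_diff nc_subst_add phi_gen_Ht o_def
      hecke_quadratic_expand mult.assoc del: upt_Suc\<close>)

end

theorem theorem3p11:
  fixes q :: "'a::idom" and u :: "nat \<Rightarrow> 'a" and n r :: nat
  assumes "n \<ge> 1" and "r \<ge> 1" and "q dvd 1" and "Delta u r dvd 1"
  shows "(\<forall>x\<in>fa_on (Pgens n).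
            nc_subst (psi_gen u r n q) x \<in> nc_ideal (Hgens n) (Hrels u r n q)
            \<longleftrightarrow> x \<in> nc_ideal (Pgens n) (Prels u r n q))
       \<and> (\<forall>y\<in>fa_on (Hgens n). \<exists>x\<in>fa_on (Pgens n).
            y - nc_subst (psi_gen u r n q) x \<in> nc_ideal (Hgens n) (Hrels u r n q))"
proof (rule nc_subst_presentation_iso)
  interpret H: AK_side u r n q using assms(2,4,3) by (rule AK_sideI)
  interpret P: new_side u r n q using assms(2,4,3) by (rule new_sideI)
  show "nc_subst (psi_gen u r n q) \<rho> \<in> full_ideal (Hrels u r n q)" if "\<rho> \<in> Prels u r n q" for \<rho>
    using H.nc_subst_psi_gen_Prels[OF that] by (simp add: nc_congruence.eqv_def)
  show "nc_subst (phi_gen u r n q) \<rho> \<in> full_ideal (Prels u r n q)" if "\<rho> \<in> Hrels u r n q" for \<rho>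
    using P.nc_subst_phi_gen_Hrels[OF that] by (simp add: nc_congruence.eqv_def)
qed (simp_all add: psi_gen_fa_on phi_gen_fa_on nc_subst_phi_psi_gen nc_subst_psi_phi_gen
    Prels_subset_fa_on Hrels_subset_fa_on)

end
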